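(* Let $\mathbf{A}^*\in\mathfrak{A}$ and let $\mathbb{P}_{\mathbf{A}^*}$ be a probability measure. For $t$ in a countable unbounded set $\mathcal{T}\subset(0,\infty)$ let $\mathbf{H}_{1,t},\mathbf{H}_{2,t}$ be $\mathbb{R}^{pd^2}$-valued and $[\mathbf{H}]_{1,t},[\mathbf{H}]_{2,t}$ be $\mathcal{M}_{pd^2}(\mathbb{R})$-valued random variables, and set $\hat{\mathbf{A}}_{k,t}=\mathrm{vec}^{-1}([\mathbf{H}]_{k,t}^{-1}\mathbf{H}_{k,t})$, $k=1,2$. Suppose $\hat{\mathbf{A}}_{1,t}\to\mathbf{A}^*$ in $\mathbb{P}_{\mathbf{A}^*}$-probability, and $\sqrt{t}(\mathrm{vec}(\hat{\mathbf{A}}_{1,t})-\mathrm{vec}(\mathbf{A}^* ))\xrightarrow{\mathcal{L}}N(\mathbf{0},\mathcal{H}_\infty^{-1})$ as $t\to\infty$, where $\mathcal{H}_\infty\in\mathcal{M}_{pd^2}(\mathbb{R})$ is symmetric positive definite with $t^{-1}[\mathbf{H}]_{1,t}\to\mathcal{H}_\infty$ in $\mathbb{P}_{\mathbf{A}^*}$-probability. Suppose further that, as $t\to\infty$, $$t^{-1/2}(\mathbf{H}_{2,t}-\mathbf{H}_{1,t})\to0\quad\text{and}\quad t^{-1/2}([\mathbf{H}]_{2,t}-[\mathbf{H}]_{1,t})\to0$$ in $\mathbb{P}_{\mathbf{A}^*}$-probability. Then $\hat{\mathbf{A}}_{2,t}\to\mathbf{A}^*$ in $\mathbb{P}_{\mathbf{A}^*}$-probability,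 $\sqrt{t}(\mathrm{vec}(\hat{\mathbf{A}}_{2,t})-\mathrm{vec}(\mathbf{A}^* ))\xrightarrow{\mathcal{L}}N(\mathbf{0},\mathcal{H}_\infty^{-1})$, and $t^{-1}[\mathbf{H}]_{2,t}\to\mathcal{H}_\infty$ in $\mathbb{P}_{\mathbf{A}^*}$-probability.
   Context: $\mathfrak{A}=\{\mathbf{A}=(A_1,\dots,A_p)\in(\mathcal{M}_d(\mathbb{R}))^p:\ \text{all eigenvalues of }\mathcal{A}_{\mathbf{A}}\text{ have strictly negative real part}\}$, where $\mathcal{A}_{\mathbf{A}}\in\mathcal{M}_{pd}(\mathbb{R})$ is the block companion matrix with $I_d$ on the block superdiagonal and last block row $(-A_p,\dots,-A_1)$. $\mathrm{vec}:(\mathcal{M}_d(\mathbb{R}))^p\to\mathbb{R}^{pd^2}$ concatenates the column-stacked $A_1,\dots,A_p$, and $\mathrm{vec}^{-1}$ is its inverse. All limits are along $t\in\mathcal{T}$. *)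

theory Defs
  imports "HOL-Probability.Probability" "Jordan_Normal_Form.Matrix"
    "Jordan_Normal_Form.Char_Poly" "Jordan_Normal_Form.Gauss_Jordan_Elimination"
begin

text \<open>Finite-dimensional objects are JNF vectors/matrices with explicit dimensions.
  Tuples (A_1,...,A_p) are functions nat => real mat, used at indices 1..p.\<close>

definition minv :: "real mat \<Rightarrow> real mat" where
  "minv A = (case mat_inverse A of Some B \<Rightarrow> B | None \<Rightarrow> 0\<^sub>m (dim_row A) (dim_col A))"

text \<open>block companion matrix: I_d on block superdiagonal, last block row (-A_p,...,-A_1)\<close>
definition companion :: "nat \<Rightarrow> nat \<Rightarrow> (nat \<Rightarrow> real mat) \<Rightarrow> real mat" where
  "companion p d A = mat (p*d) (p*d) (\<lambda>(a,b).
     let r = a div d; i = a mod d; c = b div d; j = b mod d in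
     if r + 1 < p then (if c = r + 1 \<and> i = j then 1 else 0)
     else - ((A (p - c)) $$ (i,j)))"

definition tuple_dims :: "nat \<Rightarrow> nat \<Rightarrow> (nat \<Rightarrow> real mat) \<Rightarrow> bool" where
  "tuple_dims p d A = (\<forall>k\<in>{1..p}. A k \<in> carrier_mat d d)"

definition stable_set :: "nat \<Rightarrow> nat \<Rightarrow> (nat \<Rightarrow> real mat) set" where
  "stable_set p d = {A. tuple_dims p d A \<and>
     (\<forall>z::complex. eigenvalue (map_mat complex_of_real (companion p d A)) z \<longrightarrow> Re z < 0)}"

text \<open>vec: concatenation of the column-stacked A_1,...,A_p\<close>
definition vecA :: "nat \<Rightarrow> nat \<Rightarrow> (nat \<Rightarrow> real mat) \<Rightarrow> real vec" where
  "vecA p d A = Matrix.vec (p*d*d) (\<lambda>n. let k = n div (d*d) + 1; r = n mod (d*d)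
      in (A k) $$ (r mod d, r div d))"

definition vec_inv :: "nat \<Rightarrow> nat \<Rightarrow> real vec \<Rightarrow> (nat \<Rightarrow> real mat)" where
  "vec_inv p d v = (\<lambda>k. if 1 \<le> k \<and> k \<le> p
      then mat d d (\<lambda>(i,j). v $ ((k - 1)*d*d + j*d + i)) else 0\<^sub>m d d)"

definition estimator :: "nat \<Rightarrow> nat \<Rightarrow> real mat \<Rightarrow> real vec \<Rightarrow> (nat \<Rightarrow> real mat)" where
  "estimator p d HH h = vec_inv p d (minv HH *\<^sub>v h)"

definition vnorm :: "real vec \<Rightarrow> real" where
  "vnorm v = sqrt (\<Sum>i<dim_vec v. (v $ i)^2)"

definition mnorm :: "real mat \<Rightarrow> real" where
  "mnorm A = sqrt (\<Sum>i<dim_row A. \<Sum>j<dim_col A. (A $$ (i,j))^2)"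

definition tnorm_dist :: "nat \<Rightarrow> (nat \<Rightarrow> real mat) \<Rightarrow> (nat \<Rightarrow> real mat) \<Rightarrow> real" where
  "tnorm_dist p A B = sqrt (\<Sum>k\<in>{1..p}. (mnorm (A k - B k))^2)"

definition rv_vec :: "'a measure \<Rightarrow> nat \<Rightarrow> ('a \<Rightarrow> real vec) \<Rightarrow> bool" where
  "rv_vec M n X = ((\<forall>\<omega>\<in>space M. dim_vec (X \<omega>) = n) \<and>
      (\<forall>i<n. (\<lambda>\<omega>. X \<omega> $ i) \<in> borel_measurable M))"

definition rv_mat :: "'a measure \<Rightarrow> nat \<Rightarrow> ('a \<Rightarrow> real mat) \<Rightarrow> bool" where
  "rv_mat M n X = ((\<forall>\<omega>\<in>space M. X \<omega> \<in> carrier_mat n n) \<and>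
      (\<forall>i<n. \<forall>j<n. (\<lambda>\<omega>. X \<omega> $$ (i,j)) \<in> borel_measurable M))"

definition conv_prob_vec :: "'a measure \<Rightarrow> real filter \<Rightarrow> (real \<Rightarrow> 'a \<Rightarrow> real vec) \<Rightarrow> real vec \<Rightarrow> bool" where
  "conv_prob_vec M F X c = (\<forall>\<epsilon>>0.
      ((\<lambda>t. measure M {\<omega>\<in>space M. vnorm (X t \<omega> - c) > \<epsilon>}) \<longlongrightarrow> 0) F)"

definition conv_prob_mat :: "'a measure \<Rightarrow> real filter \<Rightarrow> (real \<Rightarrow> 'a \<Rightarrow> real mat) \<Rightarrow> real mat \<Rightarrow> bool" where
  "conv_prob_mat M F X c = (\<forall>\<epsilon>>0.
      ((\<lambda>t. measure M {\<omega>\<in>space M. mnorm (X t \<omega> - c) > \<epsilon>}) \<longlongrightarrow> 0) F)"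

definition conv_prob_tuple :: "nat \<Rightarrow> 'a measure \<Rightarrow> real filter \<Rightarrow> (real \<Rightarrow> 'a \<Rightarrow> nat \<Rightarrow> real mat)
    \<Rightarrow> (nat \<Rightarrow> real mat) \<Rightarrow> bool" where
  "conv_prob_tuple p M F X c = (\<forall>\<epsilon>>0.
      ((\<lambda>t. measure M {\<omega>\<in>space M. tnorm_dist p (X t \<omega>) c > \<epsilon>}) \<longlongrightarrow> 0) F)"

definition mvn_density :: "nat \<Rightarrow> real mat \<Rightarrow> real vec \<Rightarrow> real" where
  "mvn_density n \<Sigma> x = exp (- (x \<bullet> (minv \<Sigma> *\<^sub>v x)) / 2) / sqrt ((2*pi)^n * det \<Sigma>)"

definition mvn :: "nat \<Rightarrow> real mat \<Rightarrow> (nat \<Rightarrow> real) measure" where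
  "mvn n \<Sigma> = density (PiM {..<n} (\<lambda>_. lborel)) (\<lambda>x. ennreal (mvn_density n \<Sigma> (Matrix.vec n x)))"

definition bounded_cont_vec :: "nat \<Rightarrow> (real vec \<Rightarrow> real) \<Rightarrow> bool" where
  "bounded_cont_vec n f =
     ((\<exists>B. \<forall>v. dim_vec v = n \<longrightarrow> \<bar>f v\<bar> \<le> B) \<and>
      (\<forall>v. dim_vec v = n \<longrightarrow> (\<forall>\<epsilon>>0. \<exists>\<delta>>0. \<forall>w. dim_vec w = n \<longrightarrow>
          vnorm (w - v) < \<delta> \<longrightarrow> \<bar>f w - f v\<bar> < \<epsilon>)))"

definition conv_law_normal :: "'a measure \<Rightarrow> real filter \<Rightarrow> nat \<Rightarrow> (real \<Rightarrow> 'a \<Rightarrow> real vec) \<Rightarrow> real mat \<Rightarrow> bool" where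
  "conv_law_normal M F n X \<Sigma> = (\<forall>f. bounded_cont_vec n f \<longrightarrow>
      ((\<lambda>t. \<integral>\<omega>. f (X t \<omega>) \<partial>M) \<longlongrightarrow> (\<integral>x. f (Matrix.vec n x) \<partial>mvn n \<Sigma>)) F)"

definition sym_pos_def :: "nat \<Rightarrow> real mat \<Rightarrow> bool" where
  "sym_pos_def n H = (H \<in> carrier_mat n n \<and> transpose_mat H = H \<and>
      (\<forall>v. dim_vec v = n \<longrightarrow> v \<noteq> 0\<^sub>v n \<longrightarrow> v \<bullet> (H *\<^sub>v v) > 0))"

end

theory Submission
  imports Defs
begin

(* Write x_k = [H]_k^-1 h_k. Since t^-1 [H]_2 differs from t^-1 [H]_1 by t^-1/2 times
   t^-1/2 ([H]_2 - [H]_1), both scaled matrices converge to the invertible H_inf, so with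
   probability tending to one they are uniformly invertible. On that event the identity
   [H]_2 (x_2 - x_1) = (h_2 - h_1) - ([H]_2 - [H]_1) x_1 gives
     sqrt t |x_2 - x_1| <= C (|t^-1/2 (h_2 - h_1)| + |t^-1/2 ([H]_2 - [H]_1)| |x_1|),
   and the right-hand side tends to 0 in probability because x_1 is consistent. Hence x_2 is
   consistent, and its asymptotic normality follows from that of x_1 by Slutsky's lemma, which
   is proved for bounded continuous test functions via tightness of the Gaussian limit and
   uniform continuity on balls. *)

section \<open>Euclidean norms of vectors and matrices\<close>

lemma vnorm_eq_L2_set: "vnorm v = L2_set (\<lambda>i. v $ i) {..<dim_vec v}"
  unfolding vnorm_def L2_set_def by simp

lemma mnorm_eq_L2_set: "mnorm A = L2_set (\<lambda>(i,j). A $$ (i,j)) ({..<dim_row A} \<times> {..<dim_col A})"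
  unfolding mnorm_def L2_set_def by (simp add: sum.cartesian_product case_prod_beta)

lemma vnorm_nonneg [simp]: "0 \<le> vnorm v"
  unfolding vnorm_def by (simp add: sum_nonneg)

lemma mnorm_nonneg [simp]: "0 \<le> mnorm A"
  unfolding mnorm_def by (simp add: sum_nonneg)

lemma vnorm_add_le:
  assumes "dim_vec u = dim_vec v"
  shows "vnorm (u + v) \<le> vnorm u + vnorm v"
proof -
  have "vnorm (u + v) = L2_set (\<lambda>i. u $ i + v $ i) {..<dim_vec v}"
    unfolding vnorm_eq_L2_set using assms by (intro L2_set_cong) auto
  also have "\<dots> \<le> vnorm u + vnorm v"
    unfolding vnorm_eq_L2_set using assms by (simp add: L2_set_triangle_ineq)
  finally show ?thesis .
qed

lemma vnorm_uminus [simp]: "vnorm (- v) = vnorm v"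
  unfolding vnorm_def by simp

lemma vnorm_diff_le:
  assumes "dim_vec u = dim_vec v"
  shows "vnorm (u - v) \<le> vnorm u + vnorm v"
proof -
  have "u - v = u + (- v)" using assms by (intro eq_vecI) auto
  then show ?thesis using vnorm_add_le[of u "- v"] assms by (simp add: vnorm_uminus)
qed

lemma vnorm_triangle:
  assumes "dim_vec u = n" "dim_vec v = n" "dim_vec w = n"
  shows "vnorm (u - w) \<le> vnorm (u - v) + vnorm (v - w)"
proof -
  have "u - w = (u - v) + (v - w)" using assms by (intro eq_vecI) auto
  then show ?thesis using vnorm_add_le[of "u - v" "v - w"] assms by simp
qed

lemma vnorm_diff_commute:
  assumes "dim_vec u = dim_vec v"
  shows "vnorm (u - v) = vnorm (v - u)"
  unfolding vnorm_def using assms by (intro arg_cong[where f=sqrt] sum.cong) (auto simp: power2_commute)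

lemma vnorm_le_add_diff:
  assumes "dim_vec v = dim_vec w"
  shows "vnorm w \<le> vnorm v + vnorm (w - v)"
proof -
  have "w = v + (w - v)" using assms by (intro eq_vecI) auto
  then show ?thesis using vnorm_add_le[of v "w - v"] assms by simp
qed

lemma abs_vnorm_diff_le:
  assumes "dim_vec v = dim_vec w"
  shows "\<bar>vnorm w - vnorm v\<bar> \<le> vnorm (w - v)"
  using vnorm_le_add_diff[OF assms] vnorm_le_add_diff[of w v] vnorm_diff_commute[of v w] assms
  by linarith

lemma vnorm_smult: "vnorm (c \<cdot>\<^sub>v v) = \<bar>c\<bar> * vnorm v"
proof -
  have "vnorm (c \<cdot>\<^sub>v v) = L2_set (\<lambda>i. \<bar>c\<bar> * v $ i) {..<dim_vec v}"
    unfolding vnorm_eq_L2_set L2_set_def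
    by (intro arg_cong[where f=sqrt] sum.cong) (auto simp: power_mult_distrib)
  then show ?thesis unfolding vnorm_eq_L2_set by (simp add: L2_set_right_distrib)
qed

lemma abs_index_le_vnorm:
  assumes "i < dim_vec v"
  shows "\<bar>v $ i\<bar> \<le> vnorm v"
proof -
  have "(v $ i)^2 \<le> (\<Sum>j<dim_vec v. (v $ j)^2)"
    using assms by (intro member_le_sum) auto
  then have "sqrt ((v $ i)^2) \<le> vnorm v" unfolding vnorm_def by (rule real_sqrt_le_mono)
  then show ?thesis by simp
qed

lemma vnorm_eq_0_imp_zero:
  assumes "vnorm v = 0"
  shows "v = 0\<^sub>v (dim_vec v)"
  using abs_index_le_vnorm[of _ v] assms by (intro eq_vecI) force+

lemma mnorm_add_le:
  assumes "dim_row A = dim_row B" "dim_col A = dim_col B"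
  shows "mnorm (A + B) \<le> mnorm A + mnorm B"
proof -
  have "mnorm (A + B) = L2_set (\<lambda>x. (\<lambda>(i,j). A $$ (i,j)) x + (\<lambda>(i,j). B $$ (i,j)) x)
      ({..<dim_row B} \<times> {..<dim_col B})"
    unfolding mnorm_eq_L2_set using assms by (intro L2_set_cong) auto
  also have "\<dots> \<le> mnorm A + mnorm B"
    unfolding mnorm_eq_L2_set using assms by (simp add: L2_set_triangle_ineq)
  finally show ?thesis .
qed

lemma mnorm_triangle:
  assumes "A \<in> carrier_mat n m" "B \<in> carrier_mat n m" "C \<in> carrier_mat n m"
  shows "mnorm (A - C) \<le> mnorm (A - B) + mnorm (B - C)"
proof -
  have "A - C = (A - B) + (B - C)" using assms by (intro eq_matI) auto
  then show ?thesis using mnorm_add_le[of "A - B" "B - C"] assms by simp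
qed

lemma mnorm_smult: "mnorm (c \<cdot>\<^sub>m A) = \<bar>c\<bar> * mnorm A"
proof -
  have "mnorm (c \<cdot>\<^sub>m A) = L2_set (\<lambda>x. \<bar>c\<bar> * (\<lambda>(i,j). A $$ (i,j)) x)
      ({..<dim_row A} \<times> {..<dim_col A})"
    unfolding mnorm_eq_L2_set L2_set_def
    by (intro arg_cong[where f=sqrt] sum.cong) (auto simp: power_mult_distrib)
  then show ?thesis unfolding mnorm_eq_L2_set by (simp add: L2_set_right_distrib)
qed

lemma vnorm_mult_mat_vec_le:
  assumes A: "A \<in> carrier_mat n m" and v: "dim_vec v = m"
  shows "vnorm (A *\<^sub>v v) \<le> mnorm A * vnorm v"
proof -
  have row: "((A *\<^sub>v v) $ i)^2 \<le> (\<Sum>j<m. (A $$ (i,j))^2) * (vnorm v)^2" if i: "i < n" for i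
  proof -
    have "\<bar>(A *\<^sub>v v) $ i\<bar> = \<bar>\<Sum>j<m. A $$ (i,j) * v $ j\<bar>"
      using A v i by (auto simp: scalar_prod_def atLeast0LessThan intro!: sum.cong)
    also have "\<dots> \<le> L2_set (\<lambda>j. A $$ (i,j)) {..<m} * vnorm v"
      using L2_set_mult_ineq[of "\<lambda>j. A $$ (i,j)" "\<lambda>j. v $ j" "{..<m}"] v
      by (simp add: vnorm_eq_L2_set sum_abs[THEN order_trans] abs_mult)
    finally show ?thesis
      using power_mono[of _ _ 2] by (fastforce simp: power_mult_distrib L2_set_def sum_nonneg)
  qed
  have "(vnorm (A *\<^sub>v v))^2 = (\<Sum>i<n. ((A *\<^sub>v v) $ i)^2)"
    unfolding vnorm_def using A by (simp add: sum_nonneg)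
  also have "\<dots> \<le> (\<Sum>i<n. (\<Sum>j<m. (A $$ (i,j))^2) * (vnorm v)^2)"
    using row by (intro sum_mono) auto
  also have "\<dots> = (mnorm A * vnorm v)^2"
    unfolding mnorm_def using A by (simp add: power_mult_distrib sum_nonneg sum_distrib_right)
  finally show ?thesis by (rule power2_le_imp_le) simp
qed

lemma minus_zero_mat: "(A :: 'a :: group_add mat) \<in> carrier_mat n m \<Longrightarrow> A - 0\<^sub>m n m = A"
  by (intro eq_matI) auto

lemma smult_mat_mult_vec:
  assumes "A \<in> carrier_mat n m" "dim_vec v = m"
  shows "(c \<cdot>\<^sub>m A) *\<^sub>v v = c \<cdot>\<^sub>v (A *\<^sub>v v)"
  using assms by (intro eq_vecI) (auto simp: scalar_prod_def sum_distrib_left ac_simps)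

section \<open>Inverse matrices and perturbed linear systems\<close>

lemma minv_inverse:
  assumes A: "A \<in> carrier_mat n n" and det: "det A \<noteq> 0"
  shows "minv A \<in> carrier_mat n n" "A * minv A = 1\<^sub>m n" "minv A * A = 1\<^sub>m n"
proof -
  have unit: "A \<in> Units (ring_mat TYPE(real) n ())" by (rule det_non_zero_imp_unit[OF A det])
  obtain B where "mat_inverse A = Some B"
    using mat_inverse(1)[OF A, where b="()"] unit by (cases "mat_inverse A") auto
  then show "minv A \<in> carrier_mat n n" "A * minv A = 1\<^sub>m n" "minv A * A = 1\<^sub>m n"
    using mat_inverse(2)[OF A] unfolding minv_def by auto
qed

lemma minv_singular:
  assumes A: "A \<in> carrier_mat n n" and det: "det A = 0"
  shows "minv A = 0\<^sub>m n n"
proof (cases "mat_inverse A")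
  case (Some B)
  then have "A * B = 1\<^sub>m n" "B \<in> carrier_mat n n" using mat_inverse(2)[OF A] by auto
  then have "det A * det B = 1" using det_mult[OF A] by (metis det_one)
  with det show ?thesis by simp
qed (use A in \<open>auto simp: minv_def\<close>)

lemma minv_carrier: "A \<in> carrier_mat n n \<Longrightarrow> minv A \<in> carrier_mat n n"
  using minv_inverse(1) minv_singular by (cases "det A = 0") auto

text \<open>For singular A both sides vanish, since 1 / 0 = 0 in HOL.\<close>

lemma minv_eq_adj:
  assumes A: "A \<in> carrier_mat n n"
  shows "minv A = (1 / det A) \<cdot>\<^sub>m adj_mat A"
proof (cases "det A = 0")
  case True
  then show ?thesis using minv_singular[OF A] adj_mat(1)[OF A] by (auto intro!: eq_matI)
next
  case False
  note B = minv_inverse[OF A False]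
  have adj: "adj_mat A \<in> carrier_mat n n" "adj_mat A * A = det A \<cdot>\<^sub>m 1\<^sub>m n"
    using adj_mat[OF A] by auto
  have "adj_mat A = (adj_mat A * A) * minv A"
    using assoc_mult_mat[OF adj(1) A B(1)] B(2) adj(1) by simp
  also have "\<dots> = det A \<cdot>\<^sub>m minv A"
    using adj B(1) mult_smult_assoc_mat[OF one_carrier_mat B(1)] by simp
  finally show ?thesis using False B(1) by (auto intro!: eq_matI)
qed

lemma mult_minv_mat_vec:
  assumes A: "A \<in> carrier_mat n n" and det: "det A \<noteq> 0" and h: "dim_vec h = n"
  shows "A *\<^sub>v (minv A *\<^sub>v h) = h"
proof -
  note B = minv_inverse[OF A det]
  from h have h: "h \<in> carrier_vec n" by (rule carrier_vecI)
  have "A *\<^sub>v (minv A *\<^sub>v h) = (A * minv A) *\<^sub>v h"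
    by (rule assoc_mult_mat_vec[symmetric, OF A B(1) h])
  then show ?thesis using B(2) h by simp
qed

lemma vnorm_le_minv:
  assumes A: "A \<in> carrier_mat n n" and det: "det A \<noteq> 0" and z: "dim_vec z = n"
  shows "vnorm z \<le> mnorm (minv A) * vnorm (A *\<^sub>v z)"
proof -
  note B = minv_inverse[OF A det]
  from z have z: "z \<in> carrier_vec n" by (rule carrier_vecI)
  have "minv A *\<^sub>v (A *\<^sub>v z) = (minv A * A) *\<^sub>v z"
    by (rule assoc_mult_mat_vec[symmetric, OF B(1) A z])
  then have "z = minv A *\<^sub>v (A *\<^sub>v z)" using B(3) z by simp
  then show ?thesis using vnorm_mult_mat_vec_le[OF B(1), of "A *\<^sub>v z"] A by simp
qed

lemma det_nonzero_if_vnorm_le: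
  assumes A: "A \<in> carrier_mat n n"
    and bound: "\<And>z. dim_vec z = n \<Longrightarrow> vnorm z \<le> K * vnorm (A *\<^sub>v z)"
  shows "det A \<noteq> 0"
proof
  assume "det A = 0"
  then obtain v where v: "v \<in> carrier_vec n" "v \<noteq> 0\<^sub>v n" "A *\<^sub>v v = 0\<^sub>v n"
    using det_0_iff_vec_prod_zero[OF A] by blast
  then have "vnorm v \<le> 0" using bound[of v] by (simp add: vnorm_def)
  then have "v = 0\<^sub>v n" using vnorm_eq_0_imp_zero[of v] v(1) vnorm_nonneg[of v] by simp
  with v(2) show False ..
qed

lemma vnorm_le_perturbed:
  assumes H: "H \<in> carrier_mat n n" and A: "A \<in> carrier_mat n n" and c: "c > 0"
    and bound: "\<And>z. dim_vec z = n \<Longrightarrow> vnorm z \<le> c * vnorm (H *\<^sub>v z)"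
    and close: "mnorm (A - H) \<le> 1 / (2*c)"
    and z: "dim_vec z = n"
  shows "vnorm z \<le> 2 * c * vnorm (A *\<^sub>v z)"
proof -
  have zc: "z \<in> carrier_vec n" using z by (rule carrier_vecI)
  have AH: "A - H \<in> carrier_mat n n" using H by (rule minus_carrier_mat)
  have "(A - H) *\<^sub>v z = A *\<^sub>v z - H *\<^sub>v z" by (rule minus_mult_distrib_mat_vec[OF A H zc])
  then have "H *\<^sub>v z = A *\<^sub>v z - (A - H) *\<^sub>v z"
    using A H by (intro eq_vecI) simp_all
  then have "vnorm (H *\<^sub>v z) \<le> vnorm (A *\<^sub>v z) + vnorm ((A - H) *\<^sub>v z)"
    using vnorm_diff_le[of "A *\<^sub>v z" "(A - H) *\<^sub>v z"] A H by simp
  also have "vnorm ((A - H) *\<^sub>v z) \<le> mnorm (A - H) * vnorm z"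
    by (rule vnorm_mult_mat_vec_le[OF AH z])
  also have "\<dots> \<le> 1 / (2*c) * vnorm z"
    using close by (rule mult_right_mono) simp
  finally have "c * vnorm (H *\<^sub>v z) \<le> c * vnorm (A *\<^sub>v z) + vnorm z / 2"
    using c by (simp add: field_simps)
  then show ?thesis using bound[OF z] by simp
qed

lemma solution_perturbation_bound:
  assumes A1: "A1 \<in> carrier_mat n n" and A2: "A2 \<in> carrier_mat n n" and det1: "det A1 \<noteq> 0"
    and b1: "dim_vec b1 = n" and b2: "dim_vec b2 = n" and c: "0 \<le> c"
    and bound: "\<And>z. dim_vec z = n \<Longrightarrow> vnorm z \<le> c * vnorm (A2 *\<^sub>v z)"
  shows "vnorm (minv A2 *\<^sub>v b2 - minv A1 *\<^sub>v b1)
    \<le> c * (vnorm (b2 - b1) + mnorm (A2 - A1) * vnorm (minv A1 *\<^sub>v b1))"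
proof -
  define x1 where "x1 = minv A1 *\<^sub>v b1"
  define x2 where "x2 = minv A2 *\<^sub>v b2"
  have det2: "det A2 \<noteq> 0" by (rule det_nonzero_if_vnorm_le[OF A2 bound])
  have x1: "x1 \<in> carrier_vec n"
    unfolding x1_def using minv_carrier[OF A1] by (intro carrier_vecI) simp
  have x2: "x2 \<in> carrier_vec n"
    unfolding x2_def using minv_carrier[OF A2] by (intro carrier_vecI) simp
  have A21: "A2 - A1 \<in> carrier_mat n n" using A1 by (rule minus_carrier_mat)
  have "A2 *\<^sub>v x2 = b2" "A1 *\<^sub>v x1 = b1"
    unfolding x1_def x2_def using mult_minv_mat_vec A1 A2 det1 det2 b1 b2 by auto
  moreover have "A2 *\<^sub>v (x2 - x1) = A2 *\<^sub>v x2 - A2 *\<^sub>v x1"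
    by (rule mult_minus_distrib_mat_vec[OF A2 x2 x1])
  moreover have "(A2 - A1) *\<^sub>v x1 = A2 *\<^sub>v x1 - A1 *\<^sub>v x1"
    by (rule minus_mult_distrib_mat_vec[OF A2 A1 x1])
  ultimately have "A2 *\<^sub>v (x2 - x1) = (b2 - b1) - (A2 - A1) *\<^sub>v x1"
    using A2 b1 b2 by (intro eq_vecI) simp_all
  moreover have "vnorm ((b2 - b1) - (A2 - A1) *\<^sub>v x1) \<le> vnorm (b2 - b1) + mnorm (A2 - A1) * vnorm x1"
    using vnorm_diff_le[of "b2 - b1" "(A2 - A1) *\<^sub>v x1"] vnorm_mult_mat_vec_le[OF A21, of x1]
      A21 x1 b1 b2 by auto
  ultimately have "c * vnorm (A2 *\<^sub>v (x2 - x1)) \<le> c * (vnorm (b2 - b1) + mnorm (A2 - A1) * vnorm x1)"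
    using c by (simp add: mult_left_mono)
  moreover have "vnorm (x2 - x1) \<le> c * vnorm (A2 *\<^sub>v (x2 - x1))"
    using bound x1 x2 by simp
  ultimately show ?thesis unfolding x1_def x2_def by linarith
qed

lemma sqrt_scaled_solution_diff_le:
  fixes t :: real
  assumes t: "t > 0" and H: "H \<in> carrier_mat n n" and c: "c > 0"
    and H_bound: "\<And>z. dim_vec z = n \<Longrightarrow> vnorm z \<le> c * vnorm (H *\<^sub>v z)"
    and A1: "A1 \<in> carrier_mat n n" and A2: "A2 \<in> carrier_mat n n"
    and close1: "mnorm ((1/t) \<cdot>\<^sub>m A1 - H) \<le> 1 / (2*c)"
    and close2: "mnorm ((1/t) \<cdot>\<^sub>m A2 - H) \<le> 1 / (2*c)"
    and b1: "dim_vec b1 = n" and b2: "dim_vec b2 = n"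
    and K: "vnorm (minv A1 *\<^sub>v b1) \<le> K"
  shows "vnorm (sqrt t \<cdot>\<^sub>v (minv A2 *\<^sub>v b2 - minv A1 *\<^sub>v b1))
    \<le> 2 * c * vnorm ((1 / sqrt t) \<cdot>\<^sub>v (b2 - b1)) + 2 * c * K * mnorm ((1 / sqrt t) \<cdot>\<^sub>m (A2 - A1))"
proof -
  have tA1: "(1/t) \<cdot>\<^sub>m A1 \<in> carrier_mat n n" and tA2: "(1/t) \<cdot>\<^sub>m A2 \<in> carrier_mat n n"
    using A1 A2 by auto
  have "det ((1/t) \<cdot>\<^sub>m A1) \<noteq> 0"
    using vnorm_le_perturbed[OF H tA1 c H_bound close1] by (rule det_nonzero_if_vnorm_le[OF tA1])
  then have det1: "det A1 \<noteq> 0" by (simp add: det_smult)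
  define S where "S = vnorm (b2 - b1) + mnorm (A2 - A1) * vnorm (minv A1 *\<^sub>v b1)"
  have "vnorm z \<le> 2 * c / t * vnorm (A2 *\<^sub>v z)" if "dim_vec z = n" for z
    using vnorm_le_perturbed[OF H tA2 c H_bound close2 that] smult_mat_mult_vec[OF A2 that] t
    by (simp add: vnorm_smult)
  then have "vnorm (minv A2 *\<^sub>v b2 - minv A1 *\<^sub>v b1) \<le> 2 * c / t * S"
    unfolding S_def using c t by (intro solution_perturbation_bound[OF A1 A2 det1 b1 b2]) auto
  then have "sqrt t * vnorm (minv A2 *\<^sub>v b2 - minv A1 *\<^sub>v b1) \<le> sqrt t * (2 * c / t * S)"
    by (rule mult_left_mono) (use t in simp)
  also have "\<dots> = 2 * c * (sqrt t / t) * S"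
    using t by (simp add: field_simps)
  also have "sqrt t / t = 1 / sqrt t"
    using t by (simp add: field_simps)
  also have "2 * c * (1 / sqrt t) * S = 2 * c * (vnorm ((1 / sqrt t) \<cdot>\<^sub>v (b2 - b1))
      + mnorm ((1 / sqrt t) \<cdot>\<^sub>m (A2 - A1)) * vnorm (minv A1 *\<^sub>v b1))"
    unfolding S_def using t by (simp add: vnorm_smult mnorm_smult algebra_simps)
  also have "\<dots> \<le> 2 * c * vnorm ((1 / sqrt t) \<cdot>\<^sub>v (b2 - b1))
      + 2 * c * K * mnorm ((1 / sqrt t) \<cdot>\<^sub>m (A2 - A1))"
    using mult_right_mono[OF K mnorm_nonneg[of "(1 / sqrt t) \<cdot>\<^sub>m (A2 - A1)"]] c
    by (simp add: distrib_left mult_left_mono mult.commute mult.left_commute)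
  finally show ?thesis using t by (simp add: vnorm_smult)
qed

section \<open>Random vectors and matrices\<close>

lemma measurable_eq_on_space:
  assumes "g \<in> measurable M N" and "\<And>\<omega>. \<omega> \<in> space M \<Longrightarrow> f \<omega> = g \<omega>"
  shows "f \<in> measurable M N"
  using assms measurable_cong[of M f g N] by blast

lemma rv_vec_diff:
  assumes "rv_vec M n X" "rv_vec M n Y"
  shows "rv_vec M n (\<lambda>\<omega>. X \<omega> - Y \<omega>)"
proof -
  have "(\<lambda>\<omega>. (X \<omega> - Y \<omega>) $ i) \<in> borel_measurable M" if "i < n" for i
    by (rule measurable_eq_on_space[where g="\<lambda>\<omega>. X \<omega> $ i - Y \<omega> $ i"])
      (use assms that in \<open>auto simp: rv_vec_def intro!: borel_measurable_diff\<close>)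
  then show ?thesis using assms unfolding rv_vec_def by auto
qed

lemma rv_vec_smult:
  assumes "rv_vec M n X"
  shows "rv_vec M n (\<lambda>\<omega>. c \<cdot>\<^sub>v X \<omega>)"
proof -
  have "(\<lambda>\<omega>. (c \<cdot>\<^sub>v X \<omega>) $ i) \<in> borel_measurable M" if "i < n" for i
    by (rule measurable_eq_on_space[where g="\<lambda>\<omega>. c * X \<omega> $ i"])
      (use assms that in \<open>auto simp: rv_vec_def intro!: borel_measurable_times\<close>)
  then show ?thesis using assms unfolding rv_vec_def by auto
qed

lemma rv_vec_const: "dim_vec v = n \<Longrightarrow> rv_vec M n (\<lambda>\<omega>. v)"
  unfolding rv_vec_def by auto

lemma rv_mat_diff:
  assumes "rv_mat M n X" "rv_mat M n Y"
  shows "rv_mat M n (\<lambda>\<omega>. X \<omega> - Y \<omega>)"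
proof -
  have "(\<lambda>\<omega>. (X \<omega> - Y \<omega>) $$ (i,j)) \<in> borel_measurable M" if "i < n" "j < n" for i j
    by (rule measurable_eq_on_space[where g="\<lambda>\<omega>. X \<omega> $$ (i,j) - Y \<omega> $$ (i,j)"])
      (use assms that in \<open>auto simp: rv_mat_def intro!: borel_measurable_diff\<close>)
  then show ?thesis using assms unfolding rv_mat_def by (auto intro: minus_carrier_mat)
qed

lemma rv_mat_smult:
  assumes "rv_mat M n X"
  shows "rv_mat M n (\<lambda>\<omega>. c \<cdot>\<^sub>m X \<omega>)"
proof -
  have "(\<lambda>\<omega>. (c \<cdot>\<^sub>m X \<omega>) $$ (i,j)) \<in> borel_measurable M" if "i < n" "j < n" for i j
    by (rule measurable_eq_on_space[where g="\<lambda>\<omega>. c * X \<omega> $$ (i,j)"])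
      (use assms that in \<open>auto simp: rv_mat_def intro!: borel_measurable_times\<close>)
  then show ?thesis using assms unfolding rv_mat_def by auto
qed

lemma rv_mat_const: "A \<in> carrier_mat n n \<Longrightarrow> rv_mat M n (\<lambda>\<omega>. A)"
  unfolding rv_mat_def by auto

lemma rv_mat_mult_vec:
  assumes "rv_mat M n A" "rv_vec M n X"
  shows "rv_vec M n (\<lambda>\<omega>. A \<omega> *\<^sub>v X \<omega>)"
proof -
  have "(\<lambda>\<omega>. (A \<omega> *\<^sub>v X \<omega>) $ i) \<in> borel_measurable M" if "i < n" for i
    by (rule measurable_eq_on_space[where g="\<lambda>\<omega>. \<Sum>j<n. A \<omega> $$ (i,j) * X \<omega> $ j"])
      (use assms that in \<open>auto simp: rv_vec_def rv_mat_def scalar_prod_def atLeast0LessThan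
        intro!: borel_measurable_sum borel_measurable_times sum.cong\<close>)
  then show ?thesis using assms unfolding rv_vec_def rv_mat_def by auto
qed

lemma rv_mat_delete:
  assumes A: "rv_mat M n A" and "i < n" "j < n"
  shows "rv_mat M (n - 1) (\<lambda>\<omega>. mat_delete (A \<omega>) i j)"
proof -
  have "(\<lambda>\<omega>. mat_delete (A \<omega>) i j $$ (k, l)) \<in> borel_measurable M"
    if "k < n - 1" "l < n - 1" for k l
    by (rule measurable_eq_on_space[where g="\<lambda>\<omega>. A \<omega> $$ (if k < i then k else Suc k,
        if l < j then l else Suc l)"]) (use A that in \<open>auto simp: rv_mat_def mat_delete_def\<close>)
  then show ?thesis using A mat_delete_carrier unfolding rv_mat_def by blast
qed

lemma borel_measurable_det:
  assumes A: "rv_mat M n A"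
  shows "(\<lambda>\<omega>. det (A \<omega>)) \<in> borel_measurable M"
proof -
  have entry: "(\<lambda>\<omega>. A \<omega> $$ (i, p i)) \<in> borel_measurable M"
    if "p permutes {0..<n}" "i \<in> {0..<n}" for p i
    using A that permutes_in_image[of p "{0..<n}" i] unfolding rv_mat_def by auto
  show ?thesis
    by (rule measurable_eq_on_space[where g="\<lambda>\<omega>. \<Sum>p \<in> {p. p permutes {0..<n}}.
        signof p * (\<Prod>i = 0..<n. A \<omega> $$ (i, p i))"])
      (use A entry in \<open>auto simp: rv_mat_def det_def'
        intro!: borel_measurable_sum borel_measurable_times borel_measurable_prod\<close>)
qed

lemma rv_mat_minv:
  assumes A: "rv_mat M n A"
  shows "rv_mat M n (\<lambda>\<omega>. minv (A \<omega>))"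
proof -
  have "(\<lambda>\<omega>. minv (A \<omega>) $$ (i,j)) \<in> borel_measurable M" if ij: "i < n" "j < n" for i j
  proof (rule measurable_eq_on_space)
    show "(\<lambda>\<omega>. 1 / det (A \<omega>) * ((-1) ^ (j + i) * det (mat_delete (A \<omega>) j i)))
        \<in> borel_measurable M"
      using borel_measurable_det[OF A] borel_measurable_det[OF rv_mat_delete[OF A ij(2,1)]]
      by measurable
    show "minv (A \<omega>) $$ (i,j) = 1 / det (A \<omega>) * ((-1) ^ (j + i) * det (mat_delete (A \<omega>) j i))"
      if "\<omega> \<in> space M" for \<omega>
      using A ij that minv_eq_adj[of "A \<omega>" n] unfolding rv_mat_def
      by (auto simp: adj_mat_def cofactor_def)
  qed
  then show ?thesis using A minv_carrier unfolding rv_mat_def by auto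
qed

lemma borel_measurable_vnorm:
  assumes "rv_vec M n X"
  shows "(\<lambda>\<omega>. vnorm (X \<omega>)) \<in> borel_measurable M"
proof (rule measurable_eq_on_space)
  have "(\<lambda>\<omega>. \<Sum>i<n. (X \<omega> $ i)^2) \<in> borel_measurable M"
    using assms unfolding rv_vec_def by (auto intro!: borel_measurable_sum borel_measurable_power)
  then show "(\<lambda>\<omega>. sqrt (\<Sum>i<n. (X \<omega> $ i)^2)) \<in> borel_measurable M"
    by (rule measurable_compose[OF _ borel_measurable_sqrt])
qed (use assms in \<open>simp add: rv_vec_def vnorm_def\<close>)

lemma borel_measurable_mnorm:
  assumes "rv_mat M n X"
  shows "(\<lambda>\<omega>. mnorm (X \<omega>)) \<in> borel_measurable M"
proof (rule measurable_eq_on_space)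
  have "(\<lambda>\<omega>. \<Sum>i<n. \<Sum>j<n. (X \<omega> $$ (i,j))^2) \<in> borel_measurable M"
    using assms unfolding rv_mat_def by (auto intro!: borel_measurable_sum borel_measurable_power)
  then show "(\<lambda>\<omega>. sqrt (\<Sum>i<n. \<Sum>j<n. (X \<omega> $$ (i,j))^2)) \<in> borel_measurable M"
    by (rule measurable_compose[OF _ borel_measurable_sqrt])
qed (use assms in \<open>auto simp: rv_mat_def mnorm_def\<close>)

section \<open>Convergence in probability\<close>

definition conv_prob_zero :: "'a measure \<Rightarrow> real filter \<Rightarrow> (real \<Rightarrow> 'a \<Rightarrow> real) \<Rightarrow> bool" where
  "conv_prob_zero M F Z = (\<forall>\<epsilon>>0. ((\<lambda>t. measure M {\<omega>\<in>space M. \<epsilon> < Z t \<omega>}) \<longlongrightarrow> 0) F)"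

lemma conv_prob_vec_iff: "conv_prob_vec M F X c \<longleftrightarrow> conv_prob_zero M F (\<lambda>t \<omega>. vnorm (X t \<omega> - c))"
  unfolding conv_prob_vec_def conv_prob_zero_def ..

lemma conv_prob_mat_iff: "conv_prob_mat M F X C \<longleftrightarrow> conv_prob_zero M F (\<lambda>t \<omega>. mnorm (X t \<omega> - C))"
  unfolding conv_prob_mat_def conv_prob_zero_def ..

lemma conv_prob_tuple_iff:
  "conv_prob_tuple p M F X A \<longleftrightarrow> conv_prob_zero M F (\<lambda>t \<omega>. tnorm_dist p (X t \<omega>) A)"
  unfolding conv_prob_tuple_def conv_prob_zero_def ..

lemma conv_prob_zeroD:
  "conv_prob_zero M F Z \<Longrightarrow> 0 < \<epsilon> \<Longrightarrow> ((\<lambda>t. measure M {\<omega>\<in>space M. \<epsilon> < Z t \<omega>}) \<longlongrightarrow> 0) F"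
  unfolding conv_prob_zero_def by blast

lemma conv_prob_zero_cong:
  assumes "conv_prob_zero M F Z" and "eventually (\<lambda>t. \<forall>\<omega>\<in>space M. Z' t \<omega> = Z t \<omega>) F"
  shows "conv_prob_zero M F Z'"
  unfolding conv_prob_zero_def
proof (intro allI impI)
  fix \<epsilon> :: real assume \<epsilon>: "0 < \<epsilon>"
  have "eventually (\<lambda>t. measure M {\<omega>\<in>space M. \<epsilon> < Z' t \<omega>}
      = measure M {\<omega>\<in>space M. \<epsilon> < Z t \<omega>}) F"
    using assms(2) by eventually_elim (intro arg_cong[where f="measure M"] Collect_cong, auto)
  then show "((\<lambda>t. measure M {\<omega>\<in>space M. \<epsilon> < Z' t \<omega>}) \<longlongrightarrow> 0) F"
    by (rule tendsto_cong[THEN iffD2]) (rule conv_prob_zeroD[OF assms(1) \<epsilon>])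
qed

lemma tendsto_measure_Un_zero:
  assumes "((\<lambda>t. measure M (A t)) \<longlongrightarrow> 0) F" "((\<lambda>t. measure M (B t)) \<longlongrightarrow> 0) F"
    and "eventually (\<lambda>t. A t \<in> sets M \<and> B t \<in> sets M) F"
  shows "((\<lambda>t. measure M (A t \<union> B t)) \<longlongrightarrow> 0) F"
proof (rule tendsto_sandwich[of "\<lambda>_. 0" _ _ "\<lambda>t. measure M (A t) + measure M (B t)"])
  show "eventually (\<lambda>t. measure M (A t \<union> B t) \<le> measure M (A t) + measure M (B t)) F"
    using assms(3) by eventually_elim (simp add: measure_Un_le)
  show "((\<lambda>t. measure M (A t) + measure M (B t)) \<longlongrightarrow> 0) F"
    using tendsto_add[OF assms(1,2)] by simp
qed auto

text \<open>The dominated events need not be measurable: \<open>finite_measure_mono\<close> only requires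
  the larger set to be.\<close>

lemma conv_prob_zero_le_outside:
  assumes P: "prob_space M" and Z': "conv_prob_zero M F Z'"
    and E: "((\<lambda>t. measure M (E t)) \<longlongrightarrow> 0) F"
    and le: "eventually (\<lambda>t. E t \<in> sets M \<and> Z' t \<in> borel_measurable M
      \<and> (\<forall>\<omega>\<in>space M - E t. Z t \<omega> \<le> Z' t \<omega>)) F"
  shows "conv_prob_zero M F Z"
  unfolding conv_prob_zero_def
proof (intro allI impI)
  interpret prob_space M by (rule P)
  fix \<epsilon> :: real assume \<epsilon>: "0 < \<epsilon>"
  let ?G = "\<lambda>t. {\<omega>\<in>space M. \<epsilon> < Z' t \<omega>}"
  have EG: "((\<lambda>t. measure M (E t \<union> ?G t)) \<longlongrightarrow> 0) F"
    using le by (intro tendsto_measure_Un_zero E conv_prob_zeroD[OF Z' \<epsilon>])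
      (auto elim: eventually_mono)
  show "((\<lambda>t. measure M {\<omega>\<in>space M. \<epsilon> < Z t \<omega>}) \<longlongrightarrow> 0) F"
  proof (rule tendsto_sandwich[OF _ _ tendsto_const EG])
    show "eventually (\<lambda>t. measure M {\<omega>\<in>space M. \<epsilon> < Z t \<omega>} \<le> measure M (E t \<union> ?G t)) F"
      using le by eventually_elim (intro finite_measure_mono, force+)
  qed auto
qed

lemma conv_prob_zero_add:
  assumes P: "prob_space M" and Z1: "conv_prob_zero M F Z1" and Z2: "conv_prob_zero M F Z2"
    and meas: "eventually (\<lambda>t. Z1 t \<in> borel_measurable M \<and> Z2 t \<in> borel_measurable M) F"
  shows "conv_prob_zero M F (\<lambda>t \<omega>. Z1 t \<omega> + Z2 t \<omega>)"
  unfolding conv_prob_zero_def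
proof (intro allI impI)
  interpret prob_space M by (rule P)
  fix \<epsilon> :: real assume "0 < \<epsilon>"
  then have \<epsilon>: "0 < \<epsilon> / 2" by simp
  let ?G = "\<lambda>Z t. {\<omega>\<in>space M. \<epsilon> / 2 < Z t \<omega>}"
  have G: "((\<lambda>t. measure M (?G Z1 t \<union> ?G Z2 t)) \<longlongrightarrow> 0) F"
    using meas by (intro tendsto_measure_Un_zero conv_prob_zeroD[OF Z1 \<epsilon>] conv_prob_zeroD[OF Z2 \<epsilon>])
      (auto elim: eventually_mono)
  show "((\<lambda>t. measure M {\<omega>\<in>space M. \<epsilon> < Z1 t \<omega> + Z2 t \<omega>}) \<longlongrightarrow> 0) F"
  proof (rule tendsto_sandwich[OF _ _ tendsto_const G])
    show "eventually (\<lambda>t. measure M {\<omega>\<in>space M. \<epsilon> < Z1 t \<omega> + Z2 t \<omega>}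
        \<le> measure M (?G Z1 t \<union> ?G Z2 t)) F"
      using meas by eventually_elim (intro finite_measure_mono, auto)
  qed auto
qed

lemma conv_prob_zero_cmult:
  assumes Z: "conv_prob_zero M F Z" and c: "0 \<le> c"
  shows "conv_prob_zero M F (\<lambda>t \<omega>. c * Z t \<omega>)"
  unfolding conv_prob_zero_def
proof (intro allI impI)
  fix \<epsilon> :: real assume \<epsilon>: "0 < \<epsilon>"
  show "((\<lambda>t. measure M {\<omega>\<in>space M. \<epsilon> < c * Z t \<omega>}) \<longlongrightarrow> 0) F"
  proof (cases "c = 0")
    case False
    then have "{\<omega>\<in>space M. \<epsilon> < c * Z t \<omega>} = {\<omega>\<in>space M. \<epsilon> / c < Z t \<omega>}" for t
      using c by (auto simp: field_simps)
    then show ?thesis using conv_prob_zeroD[OF Z] \<epsilon> c False by simp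
  qed (use \<epsilon> in simp)
qed

section \<open>Slutsky's lemma for the Gaussian limit\<close>

lemma tendsto_vnorm_vec_diff_zero:
  fixes u :: "nat \<Rightarrow> nat \<Rightarrow> real"
  assumes "\<And>i. i < n \<Longrightarrow> (\<lambda>k. u k i) \<longlonglongrightarrow> a i"
  shows "(\<lambda>k. vnorm (Matrix.vec n (u k) - Matrix.vec n a)) \<longlonglongrightarrow> 0"
proof -
  have "(\<lambda>k. sqrt (\<Sum>i<n. (u k i - a i)^2)) \<longlonglongrightarrow> sqrt (\<Sum>i<n. (a i - a i)^2)"
    by (intro tendsto_real_sqrt tendsto_sum tendsto_power tendsto_diff assms tendsto_const) auto
  then show ?thesis unfolding vnorm_def by simp
qed

lemma bounded_cont_vec_tendsto:
  assumes f: "bounded_cont_vec n f" and v: "dim_vec v = n"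
    and w: "\<And>k. dim_vec (w k) = n" and lim: "(\<lambda>k. vnorm (w k - v)) \<longlonglongrightarrow> 0"
  shows "(\<lambda>k. f (w k)) \<longlonglongrightarrow> f v"
proof (rule LIMSEQ_I)
  fix r :: real assume "0 < r"
  then obtain \<delta> where \<delta>: "\<delta> > 0" "\<And>w'. dim_vec w' = n \<Longrightarrow> vnorm (w' - v) < \<delta> \<Longrightarrow> \<bar>f w' - f v\<bar> < r"
    using f v unfolding bounded_cont_vec_def by metis
  obtain k0 where "\<And>k. k \<ge> k0 \<Longrightarrow> norm (vnorm (w k - v) - 0) < \<delta>"
    using LIMSEQ_D[OF lim \<delta>(1)] by blast
  then show "\<exists>k0. \<forall>k\<ge>k0. norm (f (w k) - f v) < r"
    using \<delta>(2) w by auto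
qed

lemma borel_measurable_bounded_cont_vec:
  assumes f: "bounded_cont_vec n f" and X: "rv_vec M n X"
  shows "(\<lambda>\<omega>. f (X \<omega>)) \<in> borel_measurable M"
proof -
  define e where "e \<omega> = (\<lambda>i. if i < n then X \<omega> $ i else 0)" for \<omega>
  have "(\<lambda>\<omega>. e \<omega> i) \<in> borel_measurable M" for i
    using X unfolding e_def rv_vec_def by (cases "i < n") auto
  then have "e \<in> borel_measurable M" by (rule measurable_coordinatewise_then_product)
  moreover have "continuous_on UNIV (\<lambda>x::nat \<Rightarrow> real. f (Matrix.vec n x))"
  proof (rule continuous_on_sequentiallyI)
    fix u :: "nat \<Rightarrow> nat \<Rightarrow> real" and a
    assume "u \<longlonglongrightarrow> a"
    then have "(\<lambda>k. u k i) \<longlonglongrightarrow> a i" for i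
      by (rule continuous_on_tendsto_compose[OF continuous_on_product_coordinates[of i]]) auto
    then show "(\<lambda>k. f (Matrix.vec n (u k))) \<longlonglongrightarrow> f (Matrix.vec n a)"
      by (intro bounded_cont_vec_tendsto[OF f] tendsto_vnorm_vec_diff_zero) auto
  qed
  ultimately have "(\<lambda>\<omega>. f (Matrix.vec n (e \<omega>))) \<in> borel_measurable M"
    by (rule borel_measurable_continuous_on[rotated])
  moreover have "Matrix.vec n (e \<omega>) = X \<omega>" if "\<omega> \<in> space M" for \<omega>
    using X that unfolding rv_vec_def e_def by (intro eq_vecI) auto
  ultimately show ?thesis by (auto intro: measurable_eq_on_space)
qed

lemma bounded_coordinates_convergent_subseq:
  fixes u :: "nat \<Rightarrow> nat \<Rightarrow> real"
  assumes "\<And>k i. \<bar>u k i\<bar> \<le> B"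
  shows "\<exists>r. strict_mono r \<and> (\<forall>i<n. convergent (\<lambda>m. u (r m) i))"
proof (induction n)
  case 0
  show ?case by (intro exI[of _ id]) (auto simp: strict_mono_def)
next
  case (Suc n)
  then obtain r1 where r1: "strict_mono r1" "\<forall>i<n. convergent (\<lambda>m. u (r1 m) i)" by blast
  have "bounded (range (\<lambda>m. u (r1 m) n))" using assms by (intro boundedI[where B=B]) auto
  then obtain l r2 where r2: "strict_mono r2" "((\<lambda>m. u (r1 m) n) \<circ> r2) \<longlonglongrightarrow> l"
    using bounded_imp_convergent_subsequence by blast
  have "convergent (\<lambda>m. u ((r1 \<circ> r2) m) i)" if "i < Suc n" for i
  proof (cases "i < n")
    case True
    then have "convergent ((\<lambda>m. u (r1 m) i) \<circ> r2)"
      using r1(2) r2(1) by (intro convergent_subseq_convergent) auto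
    then show ?thesis by (simp add: o_def)
  next
    case False
    with that have "i = n" by simp
    then show ?thesis using r2(2) by (auto simp: convergent_def o_def)
  qed
  then show ?case using strict_mono_o[OF r1(1) r2(1)] by blast
qed

lemma bounded_vec_seq_convergent_subseq:
  fixes v :: "nat \<Rightarrow> real vec"
  assumes dim: "\<And>k. dim_vec (v k) = n" and bound: "\<And>k. vnorm (v k) \<le> R"
  shows "\<exists>r a. strict_mono r \<and> dim_vec a = n \<and> (\<lambda>m. vnorm (v (r m) - a)) \<longlonglongrightarrow> 0"
proof -
  define u where "u k i = (if i < n then v k $ i else 0)" for k i
  have "\<bar>u k i\<bar> \<le> \<bar>R\<bar>" for k i
    using abs_index_le_vnorm[of i "v k"] bound[of k] dim[of k] unfolding u_def by auto
  then obtain r where r: "strict_mono r" "\<forall>i<n. convergent (\<lambda>m. u (r m) i)"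
    using bounded_coordinates_convergent_subseq by blast
  define a where "a = Matrix.vec n (\<lambda>i. lim (\<lambda>m. u (r m) i))"
  have "(\<lambda>m. vnorm (Matrix.vec n (u (r m)) - a)) \<longlonglongrightarrow> 0"
    unfolding a_def using r(2) by (intro tendsto_vnorm_vec_diff_zero) (simp add: convergent_LIMSEQ_iff)
  moreover have "Matrix.vec n (u (r m)) = v (r m)" for m
    using dim by (intro eq_vecI) (auto simp: u_def)
  ultimately have "(\<lambda>m. vnorm (v (r m) - a)) \<longlonglongrightarrow> 0" by simp
  moreover have "dim_vec a = n" unfolding a_def by simp
  ultimately show ?thesis using r(1) by blast
qed

text \<open>Heine--Cantor on the ball of radius R, by Bolzano--Weierstrass.\<close>

lemma bounded_cont_vec_uniform_on_ball:
  assumes f: "bounded_cont_vec n f" and \<epsilon>: "\<epsilon> > 0"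
  shows "\<exists>\<delta>>0. \<forall>v w. dim_vec v = n \<longrightarrow> dim_vec w = n \<longrightarrow> vnorm v \<le> R \<longrightarrow>
    vnorm (w - v) < \<delta> \<longrightarrow> \<bar>f w - f v\<bar> < \<epsilon>"
proof (rule ccontr)
  assume neg: "\<not> ?thesis"
  have "\<forall>k::nat. \<exists>v w. dim_vec v = n \<and> dim_vec w = n \<and> vnorm v \<le> R
      \<and> vnorm (w - v) < 1 / (real k + 1) \<and> \<epsilon> \<le> \<bar>f w - f v\<bar>"
  proof
    fix k :: nat
    have "1 / (real k + 1) > 0" by simp
    then show "\<exists>v w. dim_vec v = n \<and> dim_vec w = n \<and> vnorm v \<le> R
        \<and> vnorm (w - v) < 1 / (real k + 1) \<and> \<epsilon> \<le> \<bar>f w - f v\<bar>"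
      using neg by (meson not_less)
  qed
  then obtain V W where VW: "\<forall>k. dim_vec (V k) = n \<and> dim_vec (W k) = n \<and> vnorm (V k) \<le> R
      \<and> vnorm (W k - V k) < 1 / (real k + 1) \<and> \<epsilon> \<le> \<bar>f (W k) - f (V k)\<bar>"
    by metis
  obtain r a where ra: "strict_mono r" "dim_vec a = n" "(\<lambda>m. vnorm (V (r m) - a)) \<longlonglongrightarrow> 0"
    using bounded_vec_seq_convergent_subseq[of V n R] VW by blast
  have inv: "(\<lambda>m. 1 / (real m + 1)) \<longlonglongrightarrow> 0"
    using LIMSEQ_inverse_real_of_nat by (simp add: inverse_eq_divide add.commute)
  have "(\<lambda>m. vnorm (W (r m) - a)) \<longlonglongrightarrow> 0"
  proof (rule tendsto_sandwich[of "\<lambda>_. 0" _ _ "\<lambda>m. 1 / (real m + 1) + vnorm (V (r m) - a)"])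
    have "vnorm (W (r m) - a) \<le> 1 / (real m + 1) + vnorm (V (r m) - a)" for m
    proof -
      have "vnorm (W (r m) - a) \<le> vnorm (W (r m) - V (r m)) + vnorm (V (r m) - a)"
        using VW ra(2) by (intro vnorm_triangle[where n=n]) auto
      moreover have "vnorm (W (r m) - V (r m)) < 1 / (real (r m) + 1)" using VW by auto
      moreover have "1 / (real (r m) + 1) \<le> 1 / (real m + 1)"
        using seq_suble[OF ra(1), of m] by (intro divide_left_mono) auto
      ultimately show ?thesis by linarith
    qed
    then show "eventually (\<lambda>m. vnorm (W (r m) - a) \<le> 1 / (real m + 1) + vnorm (V (r m) - a))
        sequentially" by simp
    show "(\<lambda>m. 1 / (real m + 1) + vnorm (V (r m) - a)) \<longlonglongrightarrow> 0"
      using tendsto_add[OF inv ra(3)] by simp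
  qed simp_all
  then have "(\<lambda>m. f (W (r m))) \<longlonglongrightarrow> f a"
    using VW ra(2) by (intro bounded_cont_vec_tendsto[OF f]) auto
  moreover have "(\<lambda>m. f (V (r m))) \<longlonglongrightarrow> f a"
    using VW ra(2,3) by (intro bounded_cont_vec_tendsto[OF f]) auto
  ultimately have "(\<lambda>m. f (W (r m)) - f (V (r m))) \<longlonglongrightarrow> 0"
    using tendsto_diff by fastforce
  then obtain m where "norm (f (W (r m)) - f (V (r m)) - 0) < \<epsilon>"
    using LIMSEQ_D[OF _ \<epsilon>] by blast
  then have "\<bar>f (W (r m)) - f (V (r m))\<bar> < \<epsilon>" by simp
  with VW show False by (meson not_less)
qed

definition tail_cutoff :: "real \<Rightarrow> real vec \<Rightarrow> real" where
  "tail_cutoff R v = min 1 (max 0 (vnorm v - R))"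

lemma tail_cutoff_bounds: "0 \<le> tail_cutoff R v" "tail_cutoff R v \<le> 1"
  unfolding tail_cutoff_def by auto

lemma tail_cutoff_eq_1: "R + 1 \<le> vnorm v \<Longrightarrow> tail_cutoff R v = 1"
  unfolding tail_cutoff_def by auto

lemma tail_cutoff_antimono: "R \<le> R' \<Longrightarrow> tail_cutoff R' v \<le> tail_cutoff R v"
  unfolding tail_cutoff_def by auto

lemma bounded_cont_vec_tail_cutoff: "bounded_cont_vec n (tail_cutoff R)"
  unfolding bounded_cont_vec_def
proof (intro conjI allI impI)
  show "\<exists>B. \<forall>v. dim_vec v = n \<longrightarrow> \<bar>tail_cutoff R v\<bar> \<le> B"
    using tail_cutoff_bounds by (intro exI[of _ 1]) auto
next
  fix v :: "real vec" and \<epsilon> :: real assume v: "dim_vec v = n" and \<epsilon>: "\<epsilon> > 0"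
  have "\<bar>tail_cutoff R w - tail_cutoff R v\<bar> \<le> vnorm (w - v)" if "dim_vec w = n" for w
  proof -
    have "\<bar>tail_cutoff R w - tail_cutoff R v\<bar> \<le> \<bar>vnorm w - vnorm v\<bar>"
      unfolding tail_cutoff_def by (auto simp: min_def max_def abs_if)
    also have "\<dots> \<le> vnorm (w - v)" using v that by (intro abs_vnorm_diff_le) simp
    finally show ?thesis .
  qed
  then show "\<exists>\<delta>>0. \<forall>w. dim_vec w = n \<longrightarrow> vnorm (w - v) < \<delta> \<longrightarrow> \<bar>tail_cutoff R w - tail_cutoff R v\<bar> < \<epsilon>"
    using \<epsilon> by force
qed

text \<open>If no cut-off is integrable, the integral is 0 by the convention for non-integrable functions.
  Otherwise dominated convergence applies as R tends to infinity.\<close>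

lemma integral_tail_cutoff_small:
  fixes N :: "'b measure"
  assumes meas: "(\<lambda>x. vnorm (g x)) \<in> borel_measurable N" and \<eta>: "\<eta> > 0"
  shows "\<exists>R. (\<integral>x. tail_cutoff R (g x) \<partial>N) < \<eta>"
proof (cases "\<exists>R0. integrable N (\<lambda>x. tail_cutoff R0 (g x))")
  case True
  then obtain R0 where int: "integrable N (\<lambda>x. tail_cutoff R0 (g x))" by blast
  have "(\<lambda>m. \<integral>x. tail_cutoff (R0 + real m) (g x) \<partial>N) \<longlonglongrightarrow> (\<integral>x. 0 \<partial>N)"
  proof (rule integral_dominated_convergence[OF _ _ int])
    show "(\<lambda>x. tail_cutoff (R0 + real m) (g x)) \<in> borel_measurable N" for m
      unfolding tail_cutoff_def using meas by measurable
    show "AE x in N. (\<lambda>m. tail_cutoff (R0 + real m) (g x)) \<longlonglongrightarrow> 0"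
    proof (rule AE_I2)
      fix x
      obtain m0 :: nat where "vnorm (g x) - R0 < real m0" using reals_Archimedean2 by blast
      then have "eventually (\<lambda>m. tail_cutoff (R0 + real m) (g x) = 0) sequentially"
        unfolding eventually_sequentially tail_cutoff_def
        by (intro exI[of _ m0]) (auto intro!: min_absorb2)
      then show "(\<lambda>m. tail_cutoff (R0 + real m) (g x)) \<longlonglongrightarrow> 0" by (rule tendsto_eventually)
    qed
    show "AE x in N. norm (tail_cutoff (R0 + real m) (g x)) \<le> tail_cutoff R0 (g x)" for m
      using tail_cutoff_antimono[of R0 "R0 + real m"] tail_cutoff_bounds by auto
  qed simp
  then have "eventually (\<lambda>m. (\<integral>x. tail_cutoff (R0 + real m) (g x) \<partial>N) < \<eta>) sequentially"
    using \<eta> by (intro order_tendstoD(2)) simp_all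
  then show ?thesis by (meson eventually_sequentially order_refl)
next
  case False
  then have "(\<integral>x. tail_cutoff 0 (g x) \<partial>N) = 0" by (intro not_integrable_integral_eq) blast
  then show ?thesis using \<eta> by (intro exI[of _ 0]) simp
qed

lemma borel_measurable_vnorm_vec_mvn: "(\<lambda>x. vnorm (Matrix.vec n x)) \<in> borel_measurable (mvn n S)"
proof -
  have "(\<lambda>x. sqrt (\<Sum>i<n. (x i)^2)) \<in> borel_measurable (PiM {..<n} (\<lambda>_. lborel))"
    by measurable
  moreover have "vnorm (Matrix.vec n x) = sqrt (\<Sum>i<n. (x i)^2)" for x
    unfolding vnorm_def by (auto intro!: arg_cong[where f=sqrt] sum.cong)
  ultimately show ?thesis unfolding mvn_def by simp
qed

text \<open>Outside the events that X leaves the ball of radius R + 1 (controlled by the cut-off) or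
  that Y deviates from X by more than \<delta>, the modulus of continuity of f applies.\<close>

lemma abs_integral_diff_le:
  assumes P: "prob_space M" and X: "rv_vec M n X" and Y: "rv_vec M n Y"
    and f: "bounded_cont_vec n f" and B: "\<And>v. dim_vec v = n \<Longrightarrow> \<bar>f v\<bar> \<le> B"
    and \<eta>: "0 \<le> \<eta>"
    and unif: "\<And>v w. dim_vec v = n \<Longrightarrow> dim_vec w = n \<Longrightarrow> vnorm v \<le> R + 1 \<Longrightarrow>
      vnorm (w - v) \<le> \<delta> \<Longrightarrow> \<bar>f w - f v\<bar> \<le> \<eta>"
  shows "\<bar>(\<integral>\<omega>. f (Y \<omega>) \<partial>M) - (\<integral>\<omega>. f (X \<omega>) \<partial>M)\<bar>
    \<le> \<eta> + 2 * B * (\<integral>\<omega>. tail_cutoff R (X \<omega>) \<partial>M)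
        + 2 * B * measure M {\<omega>\<in>space M. \<delta> < vnorm (Y \<omega> - X \<omega>)}"
proof -
  interpret prob_space M by (rule P)
  define A1 where "A1 = {\<omega>\<in>space M. R + 1 \<le> vnorm (X \<omega>)}"
  define A2 where "A2 = {\<omega>\<in>space M. \<delta> < vnorm (Y \<omega> - X \<omega>)}"
  have dims: "dim_vec (X \<omega>) = n" "dim_vec (Y \<omega>) = n" if "\<omega> \<in> space M" for \<omega>
    using X Y that unfolding rv_vec_def by auto
  have B0: "0 \<le> B" using B[of "0\<^sub>v n"] by simp
  have sets: "A1 \<in> sets M" "A2 \<in> sets M"
    unfolding A1_def A2_def
    using borel_measurable_vnorm[OF X] borel_measurable_vnorm[OF rv_vec_diff[OF Y X]] by measurable
  have intX: "integrable M (\<lambda>\<omega>. f (X \<omega>))"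
    by (rule integrable_const_bound[where B=B, OF AE_I2 borel_measurable_bounded_cont_vec[OF f X]])
      (simp add: B dims)
  have intY: "integrable M (\<lambda>\<omega>. f (Y \<omega>))"
    by (rule integrable_const_bound[where B=B, OF AE_I2 borel_measurable_bounded_cont_vec[OF f Y]])
      (simp add: B dims)
  have intc: "integrable M (\<lambda>\<omega>. tail_cutoff R (X \<omega>))"
    by (rule integrable_const_bound[where B=1, OF AE_I2
        borel_measurable_bounded_cont_vec[OF bounded_cont_vec_tail_cutoff X]])
      (simp add: tail_cutoff_bounds abs_le_iff)
  have intA: "integrable M (\<lambda>\<omega>. indicator A \<omega> :: real)" if "A \<in> sets M" for A
    using that by (intro integrable_const_bound[where B=1, OF AE_I2]) (auto simp: indicator_def)
  have pointwise: "\<bar>f (Y \<omega>) - f (X \<omega>)\<bar> \<le> \<eta> + 2 * B * indicator A1 \<omega> + 2 * B * indicator A2 \<omega>"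
    if \<omega>: "\<omega> \<in> space M" for \<omega>
  proof (cases "\<omega> \<in> A1 \<union> A2")
    case True
    have "\<bar>f (Y \<omega>) - f (X \<omega>)\<bar> \<le> 2 * B" using B dims[OF \<omega>] by (smt (verit))
    then show ?thesis using True \<eta> B0 by (auto simp: indicator_def)
  next
    case False
    then have "\<bar>f (Y \<omega>) - f (X \<omega>)\<bar> \<le> \<eta>"
      using unif dims[OF \<omega>] \<omega> unfolding A1_def A2_def by simp
    then show ?thesis using False by simp
  qed
  have A1: "measure M A1 \<le> (\<integral>\<omega>. tail_cutoff R (X \<omega>) \<partial>M)"
  proof -
    have "measure M A1 = (\<integral>\<omega>. indicator A1 \<omega> \<partial>M)"
      using sets by (simp add: Int_absorb2 sets.sets_into_space)
    also have "\<dots> \<le> (\<integral>\<omega>. tail_cutoff R (X \<omega>) \<partial>M)"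
      using intA[OF sets(1)] intc
      by (intro integral_mono) (auto simp: A1_def indicator_def tail_cutoff_eq_1 tail_cutoff_bounds)
    finally show ?thesis .
  qed
  have "\<bar>(\<integral>\<omega>. f (Y \<omega>) \<partial>M) - (\<integral>\<omega>. f (X \<omega>) \<partial>M)\<bar> \<le> (\<integral>\<omega>. \<bar>f (Y \<omega>) - f (X \<omega>)\<bar> \<partial>M)"
    using intX intY integral_norm_bound[of M "\<lambda>\<omega>. f (Y \<omega>) - f (X \<omega>)"] by simp
  also have "\<dots> \<le> (\<integral>\<omega>. \<eta> + 2 * B * indicator A1 \<omega> + 2 * B * indicator A2 \<omega> \<partial>M)"
    using intX intY intA sets pointwise by (intro integral_mono) auto
  also have "\<dots> = \<eta> + 2 * B * measure M A1 + 2 * B * measure M A2"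
    using intA sets by (simp add: prob_space Int_absorb2 sets.sets_into_space)
  also have "\<dots> \<le> \<eta> + 2 * B * (\<integral>\<omega>. tail_cutoff R (X \<omega>) \<partial>M) + 2 * B * measure M A2"
    using A1 B0 by (simp add: mult_left_mono)
  finally show ?thesis unfolding A2_def .
qed

lemma conv_law_normal_slutsky:
  assumes P: "prob_space M"
    and rv: "eventually (\<lambda>t. rv_vec M n (X t) \<and> rv_vec M n (Y t)) F"
    and X: "conv_law_normal M F n X \<Sigma>"
    and YX: "conv_prob_zero M F (\<lambda>t \<omega>. vnorm (Y t \<omega> - X t \<omega>))"
  shows "conv_law_normal M F n Y \<Sigma>"
  unfolding conv_law_normal_def
proof (intro allI impI)
  fix f assume f: "bounded_cont_vec n f"
  let ?L = "\<lambda>g. \<integral>x. g (Matrix.vec n x) \<partial>mvn n \<Sigma>"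
  have X_lim: "((\<lambda>t. \<integral>\<omega>. g (X t \<omega>) \<partial>M) \<longlongrightarrow> ?L g) F" if "bounded_cont_vec n g" for g
    using X that unfolding conv_law_normal_def by blast
  obtain B where B: "\<And>v. dim_vec v = n \<Longrightarrow> \<bar>f v\<bar> \<le> B"
    using f unfolding bounded_cont_vec_def by blast
  have B0: "0 \<le> B" using B[of "0\<^sub>v n"] by simp
  have "((\<lambda>t. (\<integral>\<omega>. f (Y t \<omega>) \<partial>M) - (\<integral>\<omega>. f (X t \<omega>) \<partial>M)) \<longlongrightarrow> 0) F"
  proof (rule tendstoI)
    fix \<epsilon> :: real assume \<epsilon>: "\<epsilon> > 0"
    define \<eta> where "\<eta> = \<epsilon> / (4 * B + 2)"
    have \<eta>: "\<eta> > 0" using \<epsilon> B0 unfolding \<eta>_def by simp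
    have "\<eta> * (4 * B + 2) = \<epsilon>" using B0 unfolding \<eta>_def by simp
    then have \<eta>\<epsilon>: "\<eta> + 2 * B * \<eta> + 2 * B * \<eta> < \<epsilon>" using \<eta> by (simp add: algebra_simps)
    obtain R where R: "?L (tail_cutoff R) < \<eta>"
      using integral_tail_cutoff_small[OF borel_measurable_vnorm_vec_mvn \<eta>] by blast
    obtain \<delta> where \<delta>: "\<delta> > 0" "\<And>v w. dim_vec v = n \<Longrightarrow> dim_vec w = n \<Longrightarrow> vnorm v \<le> R + 1 \<Longrightarrow>
        vnorm (w - v) < \<delta> \<Longrightarrow> \<bar>f w - f v\<bar> < \<eta>"
      using bounded_cont_vec_uniform_on_ball[OF f \<eta>, of "R + 1"] by blast
    have "eventually (\<lambda>t. (\<integral>\<omega>. tail_cutoff R (X t \<omega>) \<partial>M) < \<eta>) F"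
      using X_lim[OF bounded_cont_vec_tail_cutoff] R by (rule order_tendstoD(2))
    moreover have "eventually (\<lambda>t. measure M {\<omega>\<in>space M. \<delta> / 2 < vnorm (Y t \<omega> - X t \<omega>)} < \<eta>) F"
      using conv_prob_zeroD[OF YX, of "\<delta> / 2"] \<delta>(1) \<eta> by (simp add: order_tendstoD(2))
    ultimately show "eventually (\<lambda>t. dist ((\<integral>\<omega>. f (Y t \<omega>) \<partial>M) - (\<integral>\<omega>. f (X t \<omega>) \<partial>M)) 0 < \<epsilon>) F"
      using rv
    proof eventually_elim
      case (elim t)
      have "\<bar>f w - f v\<bar> \<le> \<eta>" if "dim_vec v = n" "dim_vec w = n" "vnorm v \<le> R + 1"
        "vnorm (w - v) \<le> \<delta> / 2" for v w
        using \<delta> that by (intro less_imp_le) simp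
      then have "\<bar>(\<integral>\<omega>. f (Y t \<omega>) \<partial>M) - (\<integral>\<omega>. f (X t \<omega>) \<partial>M)\<bar>
          \<le> \<eta> + 2 * B * (\<integral>\<omega>. tail_cutoff R (X t \<omega>) \<partial>M)
            + 2 * B * measure M {\<omega>\<in>space M. \<delta> / 2 < vnorm (Y t \<omega> - X t \<omega>)}"
        using elim \<eta> by (intro abs_integral_diff_le[OF P _ _ f B]) simp_all
      also have "\<dots> \<le> \<eta> + 2 * B * \<eta> + 2 * B * \<eta>"
        using elim B0 by (intro add_mono mult_left_mono) simp_all
      finally show ?case using \<eta>\<epsilon> by (simp add: dist_real_def)
    qed
  qed
  from tendsto_add[OF this X_lim[OF f]]
  show "((\<lambda>t. \<integral>\<omega>. f (Y t \<omega>) \<partial>M) \<longlongrightarrow> ?L f) F" by simp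
qed

lemma conv_law_normal_cong:
  assumes "conv_law_normal M F n X \<Sigma>" and "eventually (\<lambda>t. \<forall>\<omega>\<in>space M. Y t \<omega> = X t \<omega>) F"
  shows "conv_law_normal M F n Y \<Sigma>"
  unfolding conv_law_normal_def
proof (intro allI impI)
  fix f assume "bounded_cont_vec n f"
  then have "((\<lambda>t. \<integral>\<omega>. f (X t \<omega>) \<partial>M) \<longlongrightarrow> (\<integral>x. f (Matrix.vec n x) \<partial>mvn n \<Sigma>)) F"
    using assms(1) unfolding conv_law_normal_def by blast
  moreover have "eventually (\<lambda>t. (\<integral>\<omega>. f (Y t \<omega>) \<partial>M) = (\<integral>\<omega>. f (X t \<omega>) \<partial>M)) F"
    using assms(2) by eventually_elim (intro Bochner_Integration.integral_cong; simp)
  ultimately show "((\<lambda>t. \<integral>\<omega>. f (Y t \<omega>) \<partial>M) \<longlongrightarrow> (\<integral>x. f (Matrix.vec n x) \<partial>mvn n \<Sigma>)) F"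
    by (rule tendsto_cong[THEN iffD2, rotated])
qed

section \<open>Asymptotic equivalence of the two estimators\<close>

lemma conv_prob_mat_scaled_perturbation:
  assumes P: "prob_space M"
    and ev: "eventually (\<lambda>t. 1 \<le> t \<and> rv_mat M n (A t) \<and> rv_mat M n (B t)) F"
    and H: "H \<in> carrier_mat n n"
    and A: "conv_prob_mat M F (\<lambda>t \<omega>. (1/t) \<cdot>\<^sub>m A t \<omega>) H"
    and BA: "conv_prob_mat M F (\<lambda>t \<omega>. (1 / sqrt t) \<cdot>\<^sub>m (B t \<omega> - A t \<omega>)) (0\<^sub>m n n)"
  shows "conv_prob_mat M F (\<lambda>t \<omega>. (1/t) \<cdot>\<^sub>m B t \<omega>) H"
proof -
  let ?Z1 = "\<lambda>t \<omega>. mnorm ((1/t) \<cdot>\<^sub>m A t \<omega> - H)"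
  let ?Z2 = "\<lambda>t \<omega>. mnorm ((1 / sqrt t) \<cdot>\<^sub>m (B t \<omega> - A t \<omega>) - 0\<^sub>m n n)"
  have meas: "eventually (\<lambda>t. ?Z1 t \<in> borel_measurable M \<and> ?Z2 t \<in> borel_measurable M) F"
    using ev
  proof eventually_elim
    case (elim t)
    then have "rv_mat M n (A t)" "rv_mat M n (B t)" by auto
    then show ?case
      using H by (intro conjI borel_measurable_mnorm[where n=n] rv_mat_diff rv_mat_smult rv_mat_const)
        simp_all
  qed
  have le: "mnorm ((1/t) \<cdot>\<^sub>m B t \<omega> - H) \<le> ?Z1 t \<omega> + ?Z2 t \<omega>"
    if t: "1 \<le> t" and rv: "rv_mat M n (A t)" "rv_mat M n (B t)" and \<omega>: "\<omega> \<in> space M" for t \<omega>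
  proof -
    have At: "A t \<omega> \<in> carrier_mat n n" and Bt: "B t \<omega> \<in> carrier_mat n n"
      using rv \<omega> unfolding rv_mat_def by auto
    have "(1/t) \<cdot>\<^sub>m B t \<omega> - (1/t) \<cdot>\<^sub>m A t \<omega>
        = (1 / sqrt t) \<cdot>\<^sub>m ((1 / sqrt t) \<cdot>\<^sub>m (B t \<omega> - A t \<omega>) - 0\<^sub>m n n)"
      using At Bt t by (intro eq_matI) (auto simp: field_simps real_sqrt_mult[symmetric])
    then have "mnorm ((1/t) \<cdot>\<^sub>m B t \<omega> - (1/t) \<cdot>\<^sub>m A t \<omega>) \<le> ?Z2 t \<omega>"
      using mult_left_le_one_le[of "?Z2 t \<omega>" "1 / sqrt t"] t by (simp add: mnorm_smult)
    moreover have "mnorm ((1/t) \<cdot>\<^sub>m B t \<omega> - H)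
        \<le> mnorm ((1/t) \<cdot>\<^sub>m B t \<omega> - (1/t) \<cdot>\<^sub>m A t \<omega>) + ?Z1 t \<omega>"
      using At Bt H by (intro mnorm_triangle[where n=n and m=n]) auto
    ultimately show ?thesis by linarith
  qed
  have dominated: "eventually (\<lambda>t. {} \<in> sets M \<and> (\<lambda>\<omega>. ?Z1 t \<omega> + ?Z2 t \<omega>) \<in> borel_measurable M
      \<and> (\<forall>\<omega>\<in>space M - {}. mnorm ((1/t) \<cdot>\<^sub>m B t \<omega> - H) \<le> ?Z1 t \<omega> + ?Z2 t \<omega>)) F"
    using ev meas by eventually_elim (use le in auto)
  show ?thesis
    unfolding conv_prob_mat_iff
    by (rule conv_prob_zero_le_outside[OF P conv_prob_zero_add[OF P A[unfolded conv_prob_mat_iff]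
        BA[unfolded conv_prob_mat_iff] meas] _ dominated]) simp
qed

lemma conv_prob_vec_if_sqrt_diff:
  assumes P: "prob_space M"
    and ev: "eventually (\<lambda>t. 1 \<le> t \<and> rv_vec M n (X t) \<and> rv_vec M n (Y t)) F"
    and a: "dim_vec a = n"
    and X: "conv_prob_vec M F X a"
    and YX: "conv_prob_zero M F (\<lambda>t \<omega>. vnorm (sqrt t \<cdot>\<^sub>v (Y t \<omega> - X t \<omega>)))"
  shows "conv_prob_vec M F Y a"
proof -
  let ?Z1 = "\<lambda>t \<omega>. vnorm (sqrt t \<cdot>\<^sub>v (Y t \<omega> - X t \<omega>))"
  let ?Z2 = "\<lambda>t \<omega>. vnorm (X t \<omega> - a)"
  have meas: "eventually (\<lambda>t. ?Z1 t \<in> borel_measurable M \<and> ?Z2 t \<in> borel_measurable M) F"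
    using ev
  proof eventually_elim
    case (elim t)
    then have "rv_vec M n (X t)" "rv_vec M n (Y t)" by auto
    then show ?case
      using a by (intro conjI borel_measurable_vnorm[where n=n] rv_vec_diff rv_vec_smult rv_vec_const)
        simp_all
  qed
  have le: "vnorm (Y t \<omega> - a) \<le> ?Z1 t \<omega> + ?Z2 t \<omega>"
    if t: "1 \<le> t" and rv: "rv_vec M n (X t)" "rv_vec M n (Y t)" and \<omega>: "\<omega> \<in> space M" for t \<omega>
  proof -
    have "vnorm (Y t \<omega> - X t \<omega>) \<le> sqrt t * vnorm (Y t \<omega> - X t \<omega>)"
      using mult_right_mono[of 1 "sqrt t" "vnorm (Y t \<omega> - X t \<omega>)"] t by simp
    moreover have "vnorm (Y t \<omega> - a) \<le> vnorm (Y t \<omega> - X t \<omega>) + vnorm (X t \<omega> - a)"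
      using rv \<omega> a unfolding rv_vec_def by (intro vnorm_triangle[where n=n]) auto
    ultimately show ?thesis using t by (simp add: vnorm_smult)
  qed
  have dominated: "eventually (\<lambda>t. {} \<in> sets M \<and> (\<lambda>\<omega>. ?Z1 t \<omega> + ?Z2 t \<omega>) \<in> borel_measurable M
      \<and> (\<forall>\<omega>\<in>space M - {}. vnorm (Y t \<omega> - a) \<le> ?Z1 t \<omega> + ?Z2 t \<omega>)) F"
    using ev meas by eventually_elim (use le in auto)
  show ?thesis
    unfolding conv_prob_vec_iff
    by (rule conv_prob_zero_le_outside[OF P conv_prob_zero_add[OF P YX X[unfolded conv_prob_vec_iff]
        meas] _ dominated]) simp
qed

lemma conv_prob_zero_le_if_small:
  assumes P: "prob_space M" and Y: "conv_prob_zero M F Y" and r: "0 < r"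
    and Z': "conv_prob_zero M F Z'"
    and le: "eventually (\<lambda>t. Y t \<in> borel_measurable M \<and> Z' t \<in> borel_measurable M
      \<and> (\<forall>\<omega>\<in>space M. Y t \<omega> \<le> r \<longrightarrow> Z t \<omega> \<le> Z' t \<omega>)) F"
  shows "conv_prob_zero M F Z"
proof (rule conv_prob_zero_le_outside[OF P Z' conv_prob_zeroD[OF Y r]])
  show "eventually (\<lambda>t. {\<omega>\<in>space M. r < Y t \<omega>} \<in> sets M \<and> Z' t \<in> borel_measurable M
      \<and> (\<forall>\<omega>\<in>space M - {\<omega>\<in>space M. r < Y t \<omega>}. Z t \<omega> \<le> Z' t \<omega>)) F"
    using le by eventually_elim (auto intro!: borel_measurable_less)
qed

lemma conv_prob_vec_zero_imp:
  assumes "conv_prob_vec M F X (0\<^sub>v n)" and "eventually (\<lambda>t. rv_vec M n (X t)) F"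
  shows "conv_prob_zero M F (\<lambda>t \<omega>. vnorm (X t \<omega>))"
  using assms(1) unfolding conv_prob_vec_iff
proof (rule conv_prob_zero_cong)
  show "eventually (\<lambda>t. \<forall>\<omega>\<in>space M. vnorm (X t \<omega>) = vnorm (X t \<omega> - 0\<^sub>v n)) F"
    using assms(2)
  proof eventually_elim
    case (elim t)
    have "X t \<omega> - 0\<^sub>v n = X t \<omega>" if "\<omega> \<in> space M" for \<omega>
      using elim that unfolding rv_vec_def by (intro minus_zero_vec carrier_vecI) blast
    then show ?case by simp
  qed
qed

lemma conv_prob_mat_zero_imp:
  assumes "conv_prob_mat M F X (0\<^sub>m n n)" and "eventually (\<lambda>t. rv_mat M n (X t)) F"
  shows "conv_prob_zero M F (\<lambda>t \<omega>. mnorm (X t \<omega>))"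
  using assms(1) unfolding conv_prob_mat_iff
proof (rule conv_prob_zero_cong)
  show "eventually (\<lambda>t. \<forall>\<omega>\<in>space M. mnorm (X t \<omega>) = mnorm (X t \<omega> - 0\<^sub>m n n)) F"
    using assms(2)
  proof eventually_elim
    case (elim t)
    have "X t \<omega> - 0\<^sub>m n n = X t \<omega>" if "\<omega> \<in> space M" for \<omega>
      using elim that unfolding rv_mat_def by (intro minus_zero_mat) blast
    then show ?case by simp
  qed
qed

lemma conv_prob_zero_sqrt_solution_diff:
  fixes h1 h2 :: "real \<Rightarrow> 'a \<Rightarrow> real vec" and A1 A2 :: "real \<Rightarrow> 'a \<Rightarrow> real mat"
  assumes P: "prob_space M"
    and ev: "eventually (\<lambda>t. 1 \<le> t \<and> rv_vec M n (h1 t) \<and> rv_vec M n (h2 t)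
                          \<and> rv_mat M n (A1 t) \<and> rv_mat M n (A2 t)) F"
    and a: "dim_vec a = n" and H: "H \<in> carrier_mat n n" "det H \<noteq> 0"
    and x1: "conv_prob_vec M F (\<lambda>t \<omega>. minv (A1 t \<omega>) *\<^sub>v h1 t \<omega>) a"
    and A1: "conv_prob_mat M F (\<lambda>t \<omega>. (1/t) \<cdot>\<^sub>m A1 t \<omega>) H"
    and A2: "conv_prob_mat M F (\<lambda>t \<omega>. (1/t) \<cdot>\<^sub>m A2 t \<omega>) H"
    and h21: "conv_prob_vec M F (\<lambda>t \<omega>. (1 / sqrt t) \<cdot>\<^sub>v (h2 t \<omega> - h1 t \<omega>)) (0\<^sub>v n)"
    and A21: "conv_prob_mat M F (\<lambda>t \<omega>. (1 / sqrt t) \<cdot>\<^sub>m (A2 t \<omega> - A1 t \<omega>)) (0\<^sub>m n n)"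
  shows "conv_prob_zero M F
    (\<lambda>t \<omega>. vnorm (sqrt t \<cdot>\<^sub>v (minv (A2 t \<omega>) *\<^sub>v h2 t \<omega> - minv (A1 t \<omega>) *\<^sub>v h1 t \<omega>)))"
proof -
  define x where "x t \<omega> = minv (A1 t \<omega>) *\<^sub>v h1 t \<omega>" for t \<omega>
  define c where "c = mnorm (minv H) + 1"
  define K where "K = vnorm a + 1"
  define d1 where "d1 = (\<lambda>t \<omega>. mnorm ((1/t) \<cdot>\<^sub>m A1 t \<omega> - H))"
  define d2 where "d2 = (\<lambda>t \<omega>. mnorm ((1/t) \<cdot>\<^sub>m A2 t \<omega> - H))"
  define e where "e = (\<lambda>t \<omega>. vnorm ((1 / sqrt t) \<cdot>\<^sub>v (h2 t \<omega> - h1 t \<omega>)))"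
  define D where "D = (\<lambda>t \<omega>. mnorm ((1 / sqrt t) \<cdot>\<^sub>m (A2 t \<omega> - A1 t \<omega>)))"
  have c: "c > 0" unfolding c_def by (simp add: add_nonneg_pos)
  have H_bound: "vnorm z \<le> c * vnorm (H *\<^sub>v z)" if "dim_vec z = n" for z
  proof -
    have "mnorm (minv H) * vnorm (H *\<^sub>v z) \<le> c * vnorm (H *\<^sub>v z)"
      unfolding c_def by (intro mult_right_mono) simp_all
    then show ?thesis using vnorm_le_minv[OF H that] by linarith
  qed
  have rv: "eventually (\<lambda>t. 1 \<le> t \<and> rv_vec M n (\<lambda>\<omega>. (1 / sqrt t) \<cdot>\<^sub>v (h2 t \<omega> - h1 t \<omega>))
      \<and> rv_mat M n (\<lambda>\<omega>. (1 / sqrt t) \<cdot>\<^sub>m (A2 t \<omega> - A1 t \<omega>))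
      \<and> rv_mat M n (\<lambda>\<omega>. (1/t) \<cdot>\<^sub>m A1 t \<omega> - H) \<and> rv_mat M n (\<lambda>\<omega>. (1/t) \<cdot>\<^sub>m A2 t \<omega> - H)
      \<and> rv_vec M n (\<lambda>\<omega>. x t \<omega> - a)) F"
    using ev unfolding x_def
    by eventually_elim (simp add: rv_vec_smult rv_vec_diff rv_mat_smult rv_mat_diff rv_mat_const
        rv_vec_const rv_mat_mult_vec rv_mat_minv H a)
  then have meas: "eventually (\<lambda>t. 1 \<le> t \<and> d1 t \<in> borel_measurable M \<and> d2 t \<in> borel_measurable M
      \<and> (\<lambda>\<omega>. vnorm (x t \<omega> - a)) \<in> borel_measurable M
      \<and> e t \<in> borel_measurable M \<and> D t \<in> borel_measurable M) F"
    unfolding d1_def d2_def e_def D_def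
    by eventually_elim (auto intro!: borel_measurable_vnorm[where n=n] borel_measurable_mnorm[where n=n])
  define Y where "Y t \<omega> = 2 * c * d1 t \<omega> + 2 * c * d2 t \<omega> + vnorm (x t \<omega> - a)" for t \<omega>
  define Z where "Z t \<omega> = 2 * c * e t \<omega> + 2 * c * K * D t \<omega>" for t \<omega>
  have Y: "conv_prob_zero M F Y"
    unfolding Y_def using meas c
    by (intro conv_prob_zero_add[OF P] conv_prob_zero_cmult A1[unfolded conv_prob_mat_iff, folded d1_def]
        A2[unfolded conv_prob_mat_iff, folded d2_def] x1[unfolded conv_prob_vec_iff, folded x_def])
      (auto elim!: eventually_mono)
  have e: "conv_prob_zero M F e"
    unfolding e_def using rv by (intro conv_prob_vec_zero_imp[OF h21]) (auto elim: eventually_mono)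
  have D: "conv_prob_zero M F D"
    unfolding D_def using rv by (intro conv_prob_mat_zero_imp[OF A21]) (auto elim: eventually_mono)
  have Z: "conv_prob_zero M F Z"
    unfolding Z_def using meas c K_def
    by (intro conv_prob_zero_add[OF P] conv_prob_zero_cmult e D) (auto elim!: eventually_mono)
  have bound: "vnorm (sqrt t \<cdot>\<^sub>v (minv (A2 t \<omega>) *\<^sub>v h2 t \<omega> - x t \<omega>)) \<le> Z t \<omega>"
    if t: "1 \<le> t" and rv: "rv_vec M n (h1 t)" "rv_vec M n (h2 t)" "rv_mat M n (A1 t)"
      "rv_mat M n (A2 t)" and \<omega>: "\<omega> \<in> space M" and small: "Y t \<omega> \<le> 1" for t \<omega>
  proof -
    have dims: "A1 t \<omega> \<in> carrier_mat n n" "A2 t \<omega> \<in> carrier_mat n n"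
      "dim_vec (h1 t \<omega>) = n" "dim_vec (h2 t \<omega>) = n"
      using rv \<omega> unfolding rv_vec_def rv_mat_def by auto
    have "0 \<le> 2 * c * d1 t \<omega>" "0 \<le> 2 * c * d2 t \<omega>" "0 \<le> vnorm (x t \<omega> - a)"
      using c unfolding d1_def d2_def by simp_all
    then have "2 * c * d1 t \<omega> \<le> 1" "2 * c * d2 t \<omega> \<le> 1" and near: "vnorm (x t \<omega> - a) \<le> 1"
      using small unfolding Y_def by linarith+
    then have close: "d1 t \<omega> \<le> 1 / (2*c)" "d2 t \<omega> \<le> 1 / (2*c)"
      using c by (simp_all add: field_simps)
    have "dim_vec (x t \<omega>) = n" unfolding x_def using minv_carrier[OF dims(1)] by simp
    then have "vnorm (x t \<omega>) \<le> K"
      using vnorm_le_add_diff[of a "x t \<omega>"] near a unfolding K_def by simp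
    then show ?thesis
      unfolding Z_def e_def D_def x_def using t close[unfolded d1_def d2_def]
      by (intro sqrt_scaled_solution_diff_le[OF _ H(1) c H_bound dims(1,2) _ _ dims(3,4)]) simp_all
  qed
  have dominated: "eventually (\<lambda>t. Y t \<in> borel_measurable M \<and> Z t \<in> borel_measurable M \<and> (\<forall>\<omega>\<in>space M.
      Y t \<omega> \<le> 1 \<longrightarrow> vnorm (sqrt t \<cdot>\<^sub>v (minv (A2 t \<omega>) *\<^sub>v h2 t \<omega> - x t \<omega>)) \<le> Z t \<omega>)) F"
    using ev meas
  proof eventually_elim
    case (elim t)
    then have t: "1 \<le> t" and rv: "rv_vec M n (h1 t)" "rv_vec M n (h2 t)" "rv_mat M n (A1 t)"
      "rv_mat M n (A2 t)" by auto
    have "Y t \<in> borel_measurable M" "Z t \<in> borel_measurable M"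
      unfolding Y_def Z_def using elim
      by (intro borel_measurable_add borel_measurable_times borel_measurable_const; simp)+
    then show ?case using bound[OF t rv] by blast
  qed
  show ?thesis
    unfolding x_def by (rule conv_prob_zero_le_if_small[OF P Y _ Z dominated[unfolded x_def]]) simp
qed

lemma linear_estimator_perturbation:
  fixes h1 h2 :: "real \<Rightarrow> 'a \<Rightarrow> real vec" and A1 A2 :: "real \<Rightarrow> 'a \<Rightarrow> real mat"
  assumes P: "prob_space M"
    and ev: "eventually (\<lambda>t. 1 \<le> t \<and> rv_vec M n (h1 t) \<and> rv_vec M n (h2 t)
                          \<and> rv_mat M n (A1 t) \<and> rv_mat M n (A2 t)) F"
    and a: "dim_vec a = n" and H: "H \<in> carrier_mat n n" "det H \<noteq> 0"
    and x1: "conv_prob_vec M F (\<lambda>t \<omega>. minv (A1 t \<omega>) *\<^sub>v h1 t \<omega>) a"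
    and law1: "conv_law_normal M F n (\<lambda>t \<omega>. sqrt t \<cdot>\<^sub>v (minv (A1 t \<omega>) *\<^sub>v h1 t \<omega> - a)) \<Sigma>"
    and A1: "conv_prob_mat M F (\<lambda>t \<omega>. (1/t) \<cdot>\<^sub>m A1 t \<omega>) H"
    and h21: "conv_prob_vec M F (\<lambda>t \<omega>. (1 / sqrt t) \<cdot>\<^sub>v (h2 t \<omega> - h1 t \<omega>)) (0\<^sub>v n)"
    and A21: "conv_prob_mat M F (\<lambda>t \<omega>. (1 / sqrt t) \<cdot>\<^sub>m (A2 t \<omega> - A1 t \<omega>)) (0\<^sub>m n n)"
  shows "conv_prob_vec M F (\<lambda>t \<omega>. minv (A2 t \<omega>) *\<^sub>v h2 t \<omega>) a
    \<and> conv_law_normal M F n (\<lambda>t \<omega>. sqrt t \<cdot>\<^sub>v (minv (A2 t \<omega>) *\<^sub>v h2 t \<omega> - a)) \<Sigma>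
    \<and> conv_prob_mat M F (\<lambda>t \<omega>. (1/t) \<cdot>\<^sub>m A2 t \<omega>) H"
proof -
  define x1' where "x1' t \<omega> = minv (A1 t \<omega>) *\<^sub>v h1 t \<omega>" for t \<omega>
  define x2' where "x2' t \<omega> = minv (A2 t \<omega>) *\<^sub>v h2 t \<omega>" for t \<omega>
  have rv_x: "eventually (\<lambda>t. 1 \<le> t \<and> rv_vec M n (x1' t) \<and> rv_vec M n (x2' t)) F"
    using ev unfolding x1'_def x2'_def
    by eventually_elim (simp add: rv_mat_mult_vec rv_mat_minv)
  have A2: "conv_prob_mat M F (\<lambda>t \<omega>. (1/t) \<cdot>\<^sub>m A2 t \<omega>) H"
    using ev by (intro conv_prob_mat_scaled_perturbation[OF P _ H(1) A1 A21])
      (auto elim: eventually_mono)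
  have close: "conv_prob_zero M F (\<lambda>t \<omega>. vnorm (sqrt t \<cdot>\<^sub>v (x2' t \<omega> - x1' t \<omega>)))"
    unfolding x1'_def x2'_def by (rule conv_prob_zero_sqrt_solution_diff[OF P ev a H x1 A1 A2 h21 A21])
  have "conv_prob_vec M F x2' a"
    using x1 unfolding x1'_def[symmetric]
    by (rule conv_prob_vec_if_sqrt_diff[OF P rv_x a _ close])
  moreover have "conv_law_normal M F n (\<lambda>t \<omega>. sqrt t \<cdot>\<^sub>v (x2' t \<omega> - a)) \<Sigma>"
  proof (rule conv_law_normal_slutsky[OF P _ law1[folded x1'_def]])
    show "eventually (\<lambda>t. rv_vec M n (\<lambda>\<omega>. sqrt t \<cdot>\<^sub>v (x1' t \<omega> - a))
        \<and> rv_vec M n (\<lambda>\<omega>. sqrt t \<cdot>\<^sub>v (x2' t \<omega> - a))) F"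
      using rv_x by eventually_elim (simp add: rv_vec_smult rv_vec_diff rv_vec_const a)
    have "eventually (\<lambda>t. \<forall>\<omega>\<in>space M. vnorm (sqrt t \<cdot>\<^sub>v (x2' t \<omega> - a) - sqrt t \<cdot>\<^sub>v (x1' t \<omega> - a))
        = vnorm (sqrt t \<cdot>\<^sub>v (x2' t \<omega> - x1' t \<omega>))) F"
      using rv_x
    proof eventually_elim
      case (elim t)
      have "sqrt t \<cdot>\<^sub>v (x2' t \<omega> - a) - sqrt t \<cdot>\<^sub>v (x1' t \<omega> - a) = sqrt t \<cdot>\<^sub>v (x2' t \<omega> - x1' t \<omega>)"
        if "\<omega> \<in> space M" for \<omega>
        using elim that a unfolding rv_vec_def by (intro eq_vecI) (simp_all add: algebra_simps)
      then show ?case by simp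
    qed
    then show "conv_prob_zero M F
        (\<lambda>t \<omega>. vnorm (sqrt t \<cdot>\<^sub>v (x2' t \<omega> - a) - sqrt t \<cdot>\<^sub>v (x1' t \<omega> - a)))"
      by (rule conv_prob_zero_cong[OF close])
  qed
  ultimately show ?thesis using A2 unfolding x2'_def by blast
qed

section \<open>Coefficient tuples and their vectorisation\<close>

lemma sum_lessThan_mult_split:
  fixes g :: "nat \<Rightarrow> real"
  shows "(\<Sum>m<n*k. g m) = (\<Sum>a<n. \<Sum>r<k. g (a*k + r))"
proof -
  have "(\<Sum>m<n*k. g m) = (\<Sum>a<n. \<Sum>i\<in>{a*k..<a*k+k}. g i)"
    by (rule sum.nat_group[symmetric])
  also have "\<dots> = (\<Sum>a<n. \<Sum>r<k. g (a*k + r))"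
  proof (rule sum.cong[OF refl])
    fix a
    have "(\<Sum>i\<in>{0 + a*k..<k + a*k}. g i) = (\<Sum>i\<in>{0..<k}. g (i + a*k))"
      by (rule sum.shift_bounds_nat_ivl)
    then show "(\<Sum>i\<in>{a*k..<a*k+k}. g i) = (\<Sum>r<k. g (a*k + r))"
      by (simp add: add.commute atLeast0LessThan)
  qed
  finally show ?thesis .
qed

lemma vecA_dim [simp]: "dim_vec (vecA p d A) = p*d*d"
  unfolding vecA_def by simp

lemma vecA_vec_inv:
  assumes v: "dim_vec v = p*d*d"
  shows "vecA p d (vec_inv p d v) = v"
proof (rule eq_vecI)
  fix m assume "m < dim_vec v"
  then have m: "m < p*(d*d)" using v by (simp add: mult.assoc)
  then have d0: "d > 0" by (cases d) auto
  define a where "a = m div (d*d)"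
  define r where "r = m mod (d*d)"
  have "a < p" unfolding a_def using m by (simp add: less_mult_imp_div_less)
  moreover have "r div d < d" "r mod d < d"
    unfolding r_def using d0 by (simp_all add: less_mult_imp_div_less)
  moreover have "m = a*d*d + (r div d)*d + r mod d"
    unfolding a_def r_def by (metis div_mult_mod_eq mult.assoc add.assoc)
  ultimately show "vecA p d (vec_inv p d v) $ m = v $ m"
    unfolding vecA_def vec_inv_def a_def r_def using m by (simp add: mult.assoc Let_def)
qed (use v in simp)

lemma tnorm_dist_vec_inv:
  assumes A: "tuple_dims p d A" and v: "dim_vec v = p*d*d"
  shows "tnorm_dist p (vec_inv p d v) A = vnorm (v - vecA p d A)"
proof -
  define g where "g m = (v $ m - vecA p d A $ m)^2" for m
  have divmod: "(x*q + r) div q = x" "(x*q + r) mod q = r" if "r < q" for x q r :: nat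
    using that by auto
  have block: "g (a*(d*d) + (j*d + i)) = (v $ (a*d*d + j*d + i) - A (a+1) $$ (i,j))^2"
    if a: "a < p" and i: "i < d" and j: "j < d" for a i j
  proof -
    have ji: "j*d + i < d*d"
    proof -
      have "j*d + i < (j+1)*d" using i by simp
      also have "\<dots> \<le> d*d" using j by (intro mult_right_mono) auto
      finally show ?thesis .
    qed
    have "a*(d*d) + (j*d + i) < (a+1)*(d*d)" using ji by simp
    also have "\<dots> \<le> p*(d*d)" using a by (intro mult_right_mono) auto
    finally have "a*(d*d) + (j*d + i) < p*d*d" by (simp add: mult.assoc)
    moreover note divmod[OF ji, of a] divmod[OF i, of j]
    ultimately show ?thesis unfolding g_def vecA_def by (simp add: mult.assoc add.assoc)
  qed
  have "vnorm (v - vecA p d A)^2 = (\<Sum>m<p*(d*d). g m)"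
    unfolding vnorm_def g_def using v by (simp add: sum_nonneg mult.assoc)
  also have "\<dots> = (\<Sum>a<p. \<Sum>j<d. \<Sum>i<d. g (a*(d*d) + (j*d + i)))"
    by (simp only: sum_lessThan_mult_split)
  also have "\<dots> = (\<Sum>a<p. \<Sum>i<d. \<Sum>j<d. g (a*(d*d) + (j*d + i)))"
    by (rule sum.cong[OF refl], rule sum.swap)
  also have "\<dots> = (\<Sum>a<p. \<Sum>i<d. \<Sum>j<d. (v $ (a*d*d + j*d + i) - A (a+1) $$ (i,j))^2)"
    using block by (intro sum.cong refl) simp
  also have "\<dots> = (\<Sum>a<p. mnorm (vec_inv p d v (a+1) - A (a+1))^2)"
  proof (intro sum.cong refl)
    fix a assume a: "a \<in> {..<p}"
    then have "A (a+1) \<in> carrier_mat d d" using A unfolding tuple_dims_def by auto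
    then show "(\<Sum>i<d. \<Sum>j<d. (v $ (a*d*d + j*d + i) - A (a+1) $$ (i,j))^2)
        = mnorm (vec_inv p d v (a+1) - A (a+1))^2"
      using a unfolding mnorm_def by (simp add: vec_inv_def sum_nonneg)
  qed
  also have "\<dots> = tnorm_dist p (vec_inv p d v) A ^ 2"
    unfolding tnorm_dist_def
    using sum.atLeast1_atMost_eq[of "\<lambda>k. mnorm (vec_inv p d v k - A k)^2" p] by (simp add: sum_nonneg)
  finally show ?thesis
    by (rule power2_eq_imp_eq[symmetric]) (simp_all add: tnorm_dist_def sum_nonneg)
qed

lemma dim_minv_mult_vec:
  assumes "rv_mat M (p*d*d) HH" "\<omega> \<in> space M"
  shows "dim_vec (minv (HH \<omega>) *\<^sub>v h) = p*d*d"
proof -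
  have "HH \<omega> \<in> carrier_mat (p*d*d) (p*d*d)" using assms unfolding rv_mat_def by blast
  then show ?thesis by (simp add: carrier_matD(1)[OF minv_carrier])
qed

lemma conv_prob_tuple_estimator_iff:
  assumes A: "tuple_dims p d A" and HH: "eventually (\<lambda>t. rv_mat M (p*d*d) (HH t)) F"
  shows "conv_prob_tuple p M F (\<lambda>t \<omega>. estimator p d (HH t \<omega>) (h t \<omega>)) A
    \<longleftrightarrow> conv_prob_vec M F (\<lambda>t \<omega>. minv (HH t \<omega>) *\<^sub>v h t \<omega>) (vecA p d A)"
proof -
  have eq: "eventually (\<lambda>t. \<forall>\<omega>\<in>space M. tnorm_dist p (estimator p d (HH t \<omega>) (h t \<omega>)) A
      = vnorm (minv (HH t \<omega>) *\<^sub>v h t \<omega> - vecA p d A)) F"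
    using HH
  proof eventually_elim
    case (elim t)
    show ?case
      unfolding estimator_def using dim_minv_mult_vec[OF elim] by (blast intro: tnorm_dist_vec_inv[OF A])
  qed
  show ?thesis
    unfolding conv_prob_tuple_iff conv_prob_vec_iff
  proof
    assume "conv_prob_zero M F (\<lambda>t \<omega>. tnorm_dist p (estimator p d (HH t \<omega>) (h t \<omega>)) A)"
    then show "conv_prob_zero M F (\<lambda>t \<omega>. vnorm (minv (HH t \<omega>) *\<^sub>v h t \<omega> - vecA p d A))"
      by (rule conv_prob_zero_cong) (rule eventually_mono[OF eq], simp)
  next
    assume "conv_prob_zero M F (\<lambda>t \<omega>. vnorm (minv (HH t \<omega>) *\<^sub>v h t \<omega> - vecA p d A))"
    then show "conv_prob_zero M F (\<lambda>t \<omega>. tnorm_dist p (estimator p d (HH t \<omega>) (h t \<omega>)) A)"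
      by (rule conv_prob_zero_cong) (rule eq)
  qed
qed

lemma conv_law_normal_estimator_iff:
  assumes HH: "eventually (\<lambda>t. rv_mat M (p*d*d) (HH t)) F"
  shows "conv_law_normal M F (p*d*d)
      (\<lambda>t \<omega>. sqrt t \<cdot>\<^sub>v (vecA p d (estimator p d (HH t \<omega>) (h t \<omega>)) - vecA p d A)) \<Sigma>
    \<longleftrightarrow> conv_law_normal M F (p*d*d) (\<lambda>t \<omega>. sqrt t \<cdot>\<^sub>v (minv (HH t \<omega>) *\<^sub>v h t \<omega> - vecA p d A)) \<Sigma>"
proof -
  have eq: "eventually (\<lambda>t. \<forall>\<omega>\<in>space M. vecA p d (estimator p d (HH t \<omega>) (h t \<omega>))
      = minv (HH t \<omega>) *\<^sub>v h t \<omega>) F"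
    using HH
  proof eventually_elim
    case (elim t)
    show ?case
      unfolding estimator_def using dim_minv_mult_vec[OF elim] by (blast intro: vecA_vec_inv)
  qed
  show ?thesis
  proof
    assume "conv_law_normal M F (p*d*d)
      (\<lambda>t \<omega>. sqrt t \<cdot>\<^sub>v (vecA p d (estimator p d (HH t \<omega>) (h t \<omega>)) - vecA p d A)) \<Sigma>"
    then show "conv_law_normal M F (p*d*d)
      (\<lambda>t \<omega>. sqrt t \<cdot>\<^sub>v (minv (HH t \<omega>) *\<^sub>v h t \<omega> - vecA p d A)) \<Sigma>"
      by (rule conv_law_normal_cong) (rule eventually_mono[OF eq], simp)
  next
    assume "conv_law_normal M F (p*d*d)
      (\<lambda>t \<omega>. sqrt t \<cdot>\<^sub>v (minv (HH t \<omega>) *\<^sub>v h t \<omega> - vecA p d A)) \<Sigma>"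
    then show "conv_law_normal M F (p*d*d)
      (\<lambda>t \<omega>. sqrt t \<cdot>\<^sub>v (vecA p d (estimator p d (HH t \<omega>) (h t \<omega>)) - vecA p d A)) \<Sigma>"
      by (rule conv_law_normal_cong) (rule eventually_mono[OF eq], simp)
  qed
qed

lemma sym_pos_def_det_nonzero:
  assumes "sym_pos_def n H"
  shows "det H \<noteq> 0"
proof
  assume "det H = 0"
  moreover have H: "H \<in> carrier_mat n n" using assms unfolding sym_pos_def_def by simp
  ultimately obtain v where v: "v \<in> carrier_vec n" "v \<noteq> 0\<^sub>v n" "H *\<^sub>v v = 0\<^sub>v n"
    using det_0_iff_vec_prod_zero[OF H] by blast
  moreover from v(1) have "dim_vec v = n" by (rule carrier_vecD)
  ultimately have "v \<bullet> (H *\<^sub>v v) > 0" using assms unfolding sym_pos_def_def by blast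
  with v show False by simp
qed

theorem lemma3:
  fixes p d :: nat and M :: "'a measure" and T :: "real set"
    and Astar :: "nat \<Rightarrow> real mat"
    and h1 h2 :: "real \<Rightarrow> 'a \<Rightarrow> real vec" and HH1 HH2 :: "real \<Rightarrow> 'a \<Rightarrow> real mat"
    and Hinf :: "real mat"
  defines "F \<equiv> at_top \<sqinter> principal T"
  assumes "Astar \<in> stable_set p d"
    and "prob_space M"
    and "countable T" and "T \<subseteq> {0<..}" and "\<not> bdd_above T"
    and "\<forall>t\<in>T. rv_vec M (p*d*d) (h1 t) \<and> rv_vec M (p*d*d) (h2 t)
               \<and> rv_mat M (p*d*d) (HH1 t) \<and> rv_mat M (p*d*d) (HH2 t)"
    and "conv_prob_tuple p M F (\<lambda>t \<omega>. estimator p d (HH1 t \<omega>) (h1 t \<omega>)) Astar"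
    and "conv_law_normal M F (p*d*d)
           (\<lambda>t \<omega>. sqrt t \<cdot>\<^sub>v (vecA p d (estimator p d (HH1 t \<omega>) (h1 t \<omega>)) - vecA p d Astar))
           (minv Hinf)"
    and "sym_pos_def (p*d*d) Hinf"
    and "conv_prob_mat M F (\<lambda>t \<omega>. (1/t) \<cdot>\<^sub>m HH1 t \<omega>) Hinf"
    and "conv_prob_vec M F (\<lambda>t \<omega>. (1/sqrt t) \<cdot>\<^sub>v (h2 t \<omega> - h1 t \<omega>)) (0\<^sub>v (p*d*d))"
    and "conv_prob_mat M F (\<lambda>t \<omega>. (1/sqrt t) \<cdot>\<^sub>m (HH2 t \<omega> - HH1 t \<omega>)) (0\<^sub>m (p*d*d) (p*d*d))"
  shows "conv_prob_tuple p M F (\<lambda>t \<omega>. estimator p d (HH2 t \<omega>) (h2 t \<omega>)) Astar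
    \<and> conv_law_normal M F (p*d*d)
           (\<lambda>t \<omega>. sqrt t \<cdot>\<^sub>v (vecA p d (estimator p d (HH2 t \<omega>) (h2 t \<omega>)) - vecA p d Astar))
           (minv Hinf)
    \<and> conv_prob_mat M F (\<lambda>t \<omega>. (1/t) \<cdot>\<^sub>m HH2 t \<omega>) Hinf"
proof -
  let ?n = "p*d*d"
  have ev: "eventually (\<lambda>t. 1 \<le> t \<and> rv_vec M ?n (h1 t) \<and> rv_vec M ?n (h2 t)
      \<and> rv_mat M ?n (HH1 t) \<and> rv_mat M ?n (HH2 t)) F"
    using assms(7) unfolding F_def eventually_inf_principal
    by (auto intro: eventually_mono[OF eventually_ge_at_top[of 1]])
  then have HH: "eventually (\<lambda>t. rv_mat M ?n (HH1 t)) F" "eventually (\<lambda>t. rv_mat M ?n (HH2 t)) F"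
    by (auto elim: eventually_mono)
  have tuple: "tuple_dims p d Astar" using assms(2) unfolding stable_set_def by simp
  have H: "Hinf \<in> carrier_mat ?n ?n" "det Hinf \<noteq> 0"
    using assms(10) sym_pos_def_det_nonzero[OF assms(10)] unfolding sym_pos_def_def by auto
  have "conv_prob_vec M F (\<lambda>t \<omega>. minv (HH2 t \<omega>) *\<^sub>v h2 t \<omega>) (vecA p d Astar)
    \<and> conv_law_normal M F ?n (\<lambda>t \<omega>. sqrt t \<cdot>\<^sub>v (minv (HH2 t \<omega>) *\<^sub>v h2 t \<omega> - vecA p d Astar)) (minv Hinf)
    \<and> conv_prob_mat M F (\<lambda>t \<omega>. (1/t) \<cdot>\<^sub>m HH2 t \<omega>) Hinf"
    using assms(8,9) unfolding conv_prob_tuple_estimator_iff[OF tuple HH(1)]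
      conv_law_normal_estimator_iff[OF HH(1)]
    by (intro linear_estimator_perturbation[OF assms(3) ev vecA_dim H _ _ assms(11-13)])
  then show ?thesis
    unfolding conv_prob_tuple_estimator_iff[OF tuple HH(2)] conv_law_normal_estimator_iff[OF HH(2)] .
qed

end
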